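(* Let $\mathcal K$ be a 2-category which admits Eilenberg–Moore constructions for monads and in which idempotent 2-cells split, and let $(t,\mu,\eta)$ on $k$ and $(t',\mu',\eta')$ on $k'$ be monads in $\mathcal K$. Then (1) the category $\mathrm{Lift}^\iota(t,t')$ is equivalent to the hom-category $\mathrm{Mnd}^\iota(\mathcal K)(t,t')$; (2) the category $\mathrm{Lift}^\pi(t,t')$ is equivalent to the hom-category $\mathrm{Mnd}^\pi(\mathcal K)(t,t')$. For $t=t'$ these equivalences are strong monoidal, where $\mathrm{Lift}^{\iota}(t,t)$ and $\mathrm{Lift}^{\pi}(t,t)$ carry the monoidal structure induced by horizontal composition in $\mathcal K$ and the hom-categories carry the monoidal structure given by horizontal composition.
   Context: Conventions in a 2-category $\mathcal K$: horizontal composition and whiskering by juxtaposition in the order of functor composition; identity 1-cell of $k$ written $k$, identity 2-cell of $V$ written $V$; vertical composition $\ast$ with $\alpha\ast\beta$ meaning $\beta$ then $\alpha$. Monads $(t,\mu,\eta)$ on $k$ are associative and unital. $\mathcal K$ admits Eilenberg–Moore constructions for monads: the inclusion 2-functor from $\mathcal K$ to the Lack–Street 2-category $\mathrm{EM}(\mathcal K)$ of monads has a right 2-adjoint $J$; each monad $(t,\mu,\eta)$ gives an adjunction $f\dashv v$, $f:k\to J(t)$, $v:J(t)\to k$, unit $\eta$, counit $\epsilon$, with $t=vf$, $\mu=v\epsilon f$ (for $t'$: $f',v',\eta',\epsilon'$). Idempotent 2-cells split (each idempotent $e$ factors as $e=\iota\ast\pi$ with $\pi\ast\iota$ an identity).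 Hom-categories: $\mathrm{Mnd}^\iota(\mathcal K)(t,t')$ has objects pairs $(V,\psi)$ with $V:k\to k'$, $\psi:t'V\Rightarrow Vt$, $V\mu\ast\psi t\ast t'\psi=\psi\ast\mu'V$; morphisms $(V,\psi)\to(W,\phi)$ are 2-cells $\omega:V\Rightarrow W$ of $\mathcal K$ with $\omega t\ast\psi=W\mu\ast\phi t\ast t'\omega t\ast t'\psi\ast t'\eta'V$; composition is vertical composition in $\mathcal K$. $\mathrm{Mnd}^\pi(\mathcal K)(t,t')$ has the same objects and morphisms the 2-cells $\omega:V\Rightarrow W$ with $\phi\ast t'\omega=W\mu\ast\phi t\ast\eta'Wt\ast\omega t\ast\psi$. For $t=t'$ their monoidal product is $(V',\psi')\otimes(V,\psi)=(V'V,V'\psi\ast\psi'V)$, $\omega'\otimes\omega=\omega'\omega$, with unit $(k,t)$. Weak liftings: a weak lifting of a 1-cell $V:k\to k'$ for $t,t'$ is $(V,\overline V,\iota,\pi)$ with $\overline V:J(t)\to J(t')$, $\iota:v'\overline V\Rightarrow Vv$ and $\pi:Vv\Rightarrow v'\overline V$ with $\pi\ast\iota$ the identity. For weak liftings $(V,\overline V,\iota,\pi)$, $(W,\overline W,\iota,\pi)$ and $\omega:V\Rightarrow W$, a weak $\iota$-lifting of $\omega$ is $\overline\omega:\overline V\Rightarrow\overline W$ with $\iota\ast v'\overline\omega=\omega v\ast\iota$; a weak $\pi$-lifting is $\overline\omega$ with $v'\overline\omega\ast\pi=\pi\ast\omega v$. $\mathrm{Lift}^\iota(t,t')$ (resp.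 $\mathrm{Lift}^\pi(t,t')$) has as objects the weak liftings $(V,\overline V,\iota,\pi)$ and as morphisms $(V,\overline V,\iota,\pi)\to(W,\overline W,\iota,\pi)$ the pairs $(\omega,\overline\omega)$ with $\omega:V\Rightarrow W$ in $\mathcal K$ and $\overline\omega$ a weak $\iota$-lifting (resp. weak $\pi$-lifting) of $\omega$; composition is componentwise vertical composition. For $t=t'$ the monoidal structure induced by horizontal composition is $(V',\overline{V'},\iota',\pi')\otimes(V,\overline V,\iota,\pi)=(V'V,\overline{V'}\,\overline V,V'\iota\ast\iota'\overline V,\pi'\overline V\ast V'\pi)$, $(\omega',\overline{\omega'})\otimes(\omega,\overline\omega)=(\omega'\omega,\overline{\omega'}\,\overline\omega)$, unit $(k,J(t),v,v)$. *)

theory Defs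
  imports Main
begin

text \<open>A (strict) 2-category with carrier sets of objects, 1-cells and 2-cells.
  comp1 g f is g after f; vcomp a b is "a * b" (b first); hcomp a b is juxtaposition a b.\<close>

record ('o,'m,'c) twocat =
  obj :: "'o set"
  arr :: "'m set"
  cell :: "'c set"
  src1 :: "'m \<Rightarrow> 'o"
  tgt1 :: "'m \<Rightarrow> 'o"
  src2 :: "'c \<Rightarrow> 'm"
  tgt2 :: "'c \<Rightarrow> 'm"
  id1 :: "'o \<Rightarrow> 'm"
  id2 :: "'m \<Rightarrow> 'c"
  comp1 :: "'m \<Rightarrow> 'm \<Rightarrow> 'm"
  vcomp :: "'c \<Rightarrow> 'c \<Rightarrow> 'c"
  hcomp :: "'c \<Rightarrow> 'c \<Rightarrow> 'c"

definition hom1 :: "('o,'m,'c,'z) twocat_scheme \<Rightarrow> 'o \<Rightarrow> 'o \<Rightarrow> 'm set" where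
  "hom1 K x y = {f \<in> arr K. src1 K f = x \<and> tgt1 K f = y}"

definition hom2 :: "('o,'m,'c,'z) twocat_scheme \<Rightarrow> 'm \<Rightarrow> 'm \<Rightarrow> 'c set" where
  "hom2 K f g = {a \<in> cell K. src2 K a = f \<and> tgt2 K a = g}"

definition twocat :: "('o,'m,'c) twocat \<Rightarrow> bool" where
  "twocat K \<longleftrightarrow>
    (\<forall>f\<in>arr K. src1 K f \<in> obj K \<and> tgt1 K f \<in> obj K) \<and>
    (\<forall>x\<in>obj K. id1 K x \<in> hom1 K x x) \<and>
    (\<forall>f\<in>arr K. \<forall>g\<in>arr K. src1 K g = tgt1 K f \<longrightarrow>
        comp1 K g f \<in> hom1 K (src1 K f) (tgt1 K g)) \<and>
    (\<forall>f\<in>arr K. \<forall>g\<in>arr K. \<forall>h\<in>arr K. src1 K h = tgt1 K g \<and> src1 K g = tgt1 K f \<longrightarrow>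
        comp1 K (comp1 K h g) f = comp1 K h (comp1 K g f)) \<and>
    (\<forall>f\<in>arr K. comp1 K (id1 K (tgt1 K f)) f = f \<and> comp1 K f (id1 K (src1 K f)) = f) \<and>
    (\<forall>a\<in>cell K. src2 K a \<in> arr K \<and> tgt2 K a \<in> arr K \<and>
        src1 K (src2 K a) = src1 K (tgt2 K a) \<and> tgt1 K (src2 K a) = tgt1 K (tgt2 K a)) \<and>
    (\<forall>f\<in>arr K. id2 K f \<in> hom2 K f f) \<and>
    (\<forall>a\<in>cell K. \<forall>b\<in>cell K. src2 K a = tgt2 K b \<longrightarrow>
        vcomp K a b \<in> hom2 K (src2 K b) (tgt2 K a)) \<and>
    (\<forall>a\<in>cell K. \<forall>b\<in>cell K. \<forall>c\<in>cell K. src2 K a = tgt2 K b \<and> src2 K b = tgt2 K c \<longrightarrow>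
        vcomp K (vcomp K a b) c = vcomp K a (vcomp K b c)) \<and>
    (\<forall>a\<in>cell K. vcomp K (id2 K (tgt2 K a)) a = a \<and> vcomp K a (id2 K (src2 K a)) = a) \<and>
    (\<forall>a\<in>cell K. \<forall>b\<in>cell K. src1 K (src2 K a) = tgt1 K (src2 K b) \<longrightarrow>
        hcomp K a b \<in> hom2 K (comp1 K (src2 K a) (src2 K b)) (comp1 K (tgt2 K a) (tgt2 K b))) \<and>
    (\<forall>a\<in>cell K. \<forall>b\<in>cell K. \<forall>c\<in>cell K.
        src1 K (src2 K a) = tgt1 K (src2 K b) \<and> src1 K (src2 K b) = tgt1 K (src2 K c) \<longrightarrow>
        hcomp K (hcomp K a b) c = hcomp K a (hcomp K b c)) \<and>
    (\<forall>a\<in>cell K. hcomp K (id2 K (id1 K (tgt1 K (src2 K a)))) a = a \<and>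
                 hcomp K a (id2 K (id1 K (src1 K (src2 K a)))) = a) \<and>
    (\<forall>f\<in>arr K. \<forall>g\<in>arr K. src1 K g = tgt1 K f \<longrightarrow>
        hcomp K (id2 K g) (id2 K f) = id2 K (comp1 K g f)) \<and>
    (\<forall>a\<in>cell K. \<forall>a'\<in>cell K. \<forall>b\<in>cell K. \<forall>b'\<in>cell K.
        src2 K a = tgt2 K a' \<and> src2 K b = tgt2 K b' \<and> src1 K (src2 K a) = tgt1 K (src2 K b) \<longrightarrow>
        hcomp K (vcomp K a a') (vcomp K b b') = vcomp K (hcomp K a b) (hcomp K a' b'))"

definition wl :: "('o,'m,'c) twocat \<Rightarrow> 'm \<Rightarrow> 'c \<Rightarrow> 'c" where
  "wl K f a = hcomp K (id2 K f) a"
definition wr :: "('o,'m,'c) twocat \<Rightarrow> 'c \<Rightarrow> 'm \<Rightarrow> 'c" where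
  "wr K a f = hcomp K a (id2 K f)"

definition idempotents_split :: "('o,'m,'c) twocat \<Rightarrow> bool" where
  "idempotents_split K \<longleftrightarrow>
    (\<forall>e\<in>cell K. src2 K e = tgt2 K e \<and> vcomp K e e = e \<longrightarrow>
      (\<exists>W \<iota> \<pi>. W \<in> arr K \<and> \<iota> \<in> hom2 K W (tgt2 K e) \<and> \<pi> \<in> hom2 K (src2 K e) W \<and>
               vcomp K \<iota> \<pi> = e \<and> vcomp K \<pi> \<iota> = id2 K W))"

definition is_monad :: "('o,'m,'c) twocat \<Rightarrow> 'o \<Rightarrow> 'm \<Rightarrow> 'c \<Rightarrow> 'c \<Rightarrow> bool" where
  "is_monad K k t \<mu> \<eta> \<longleftrightarrow> k \<in> obj K \<and> t \<in> hom1 K k k \<and>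
     \<mu> \<in> hom2 K (comp1 K t t) t \<and> \<eta> \<in> hom2 K (id1 K k) t \<and>
     vcomp K \<mu> (wl K t \<mu>) = vcomp K \<mu> (wr K \<mu> t) \<and>
     vcomp K \<mu> (wl K t \<eta>) = id2 K t \<and> vcomp K \<mu> (wr K \<eta> t) = id2 K t"

text \<open>t-algebras in K(x,k), i.e. 1-cells (x,identity monad) to (k,t) of the Lack--Street
  2-category EM(K).\<close>
definition is_alg :: "('o,'m,'c) twocat \<Rightarrow> 'o \<Rightarrow> 'm \<Rightarrow> 'c \<Rightarrow> 'c \<Rightarrow> 'o \<Rightarrow> 'm \<Rightarrow> 'c \<Rightarrow> bool" where
  "is_alg K k t \<mu> \<eta> x a \<alpha> \<longleftrightarrow> a \<in> hom1 K x k \<and> \<alpha> \<in> hom2 K (comp1 K t a) a \<and>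
     vcomp K \<alpha> (wl K t \<alpha>) = vcomp K \<alpha> (wr K \<mu> a) \<and> vcomp K \<alpha> (wr K \<eta> a) = id2 K a"

text \<open>(E,v,psi) is the value J(t) of the right 2-adjoint J of the inclusion K \<rightarrow> EM(K) at t,
  together with the counit component (v,psi): (E,identity monad) \<rightarrow> (k,t):
  composition with it is an isomorphism of categories K(x,E) \<cong> EM(K)((x,1),(k,t)).\<close>
definition is_EM :: "('o,'m,'c) twocat \<Rightarrow> 'o \<Rightarrow> 'm \<Rightarrow> 'c \<Rightarrow> 'c \<Rightarrow> 'o \<Rightarrow> 'm \<Rightarrow> 'c \<Rightarrow> bool" where
  "is_EM K k t \<mu> \<eta> E v \<psi> \<longleftrightarrow> E \<in> obj K \<and> is_alg K k t \<mu> \<eta> E v \<psi> \<and>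
    (\<forall>x\<in>obj K.
      (\<forall>a \<alpha>. is_alg K k t \<mu> \<eta> x a \<alpha> \<longrightarrow>
         (\<exists>!g. g \<in> hom1 K x E \<and> comp1 K v g = a \<and> wr K \<psi> g = \<alpha>)) \<and>
      (\<forall>g\<in>hom1 K x E. \<forall>h\<in>hom1 K x E. \<forall>\<rho>\<in>hom2 K (comp1 K v g) (comp1 K v h).
         vcomp K (wr K \<psi> h) (wl K t \<rho>) = vcomp K \<rho> (wr K \<psi> g) \<longrightarrow>
         (\<exists>!\<theta>. \<theta> \<in> hom2 K g h \<and> wl K v \<theta> = \<rho>)))"

definition admits_EM :: "('o,'m,'c) twocat \<Rightarrow> bool" where
  "admits_EM K \<longleftrightarrow> (\<forall>k t \<mu> \<eta>. is_monad K k t \<mu> \<eta> \<longrightarrow> (\<exists>E v \<psi>. is_EM K k t \<mu> \<eta> E v \<psi>))"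

record ('ob,'ar) category =
  cobj :: "'ob set"
  chom :: "'ob \<Rightarrow> 'ob \<Rightarrow> 'ar set"
  ccomp :: "'ar \<Rightarrow> 'ar \<Rightarrow> 'ar"
  cid :: "'ob \<Rightarrow> 'ar"

definition is_functor :: "('a,'b) category \<Rightarrow> ('c,'d) category \<Rightarrow> ('a \<Rightarrow> 'c) \<Rightarrow> ('a \<Rightarrow> 'a \<Rightarrow> 'b \<Rightarrow> 'd) \<Rightarrow> bool" where
  "is_functor C D Fo Fm \<longleftrightarrow>
    (\<forall>A\<in>cobj C. Fo A \<in> cobj D) \<and>
    (\<forall>A\<in>cobj C. \<forall>B\<in>cobj C. \<forall>f\<in>chom C A B. Fm A B f \<in> chom D (Fo A) (Fo B)) \<and>
    (\<forall>A\<in>cobj C. \<forall>B\<in>cobj C. \<forall>X\<in>cobj C. \<forall>f\<in>chom C A B. \<forall>g\<in>chom C B X.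
        Fm A X (ccomp C g f) = ccomp D (Fm B X g) (Fm A B f)) \<and>
    (\<forall>A\<in>cobj C. Fm A A (cid C A) = cid D (Fo A))"

definition is_iso :: "('a,'b) category \<Rightarrow> 'a \<Rightarrow> 'a \<Rightarrow> 'b \<Rightarrow> bool" where
  "is_iso D A B f \<longleftrightarrow> f \<in> chom D A B \<and>
     (\<exists>g\<in>chom D B A. ccomp D g f = cid D A \<and> ccomp D f g = cid D B)"

definition nat_iso :: "('a,'b) category \<Rightarrow> ('c,'d) category \<Rightarrow> ('a \<Rightarrow> 'c) \<Rightarrow> ('a \<Rightarrow> 'a \<Rightarrow> 'b \<Rightarrow> 'd)
    \<Rightarrow> ('a \<Rightarrow> 'c) \<Rightarrow> ('a \<Rightarrow> 'a \<Rightarrow> 'b \<Rightarrow> 'd) \<Rightarrow> ('a \<Rightarrow> 'd) \<Rightarrow> bool" where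
  "nat_iso C D Fo Fm Go Gm \<tau> \<longleftrightarrow>
    (\<forall>A\<in>cobj C. is_iso D (Fo A) (Go A) (\<tau> A)) \<and>
    (\<forall>A\<in>cobj C. \<forall>B\<in>cobj C. \<forall>f\<in>chom C A B.
        ccomp D (Gm A B f) (\<tau> A) = ccomp D (\<tau> B) (Fm A B f))"

definition is_equivalence :: "('a,'b) category \<Rightarrow> ('c,'d) category \<Rightarrow> ('a \<Rightarrow> 'c) \<Rightarrow> ('a \<Rightarrow> 'a \<Rightarrow> 'b \<Rightarrow> 'd) \<Rightarrow> bool" where
  "is_equivalence C D Fo Fm \<longleftrightarrow> is_functor C D Fo Fm \<and>
    (\<exists>Go Gm \<sigma> \<tau>. is_functor D C Go Gm \<and>
       nat_iso C C (\<lambda>A. A) (\<lambda>A B f. f) (\<lambda>A. Go (Fo A)) (\<lambda>A B f. Gm (Fo A) (Fo B) (Fm A B f)) \<sigma> \<and>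
       nat_iso D D (\<lambda>A. Fo (Go A)) (\<lambda>A B f. Fm (Go A) (Go B) (Gm A B f)) (\<lambda>A. A) (\<lambda>A B f. f) \<tau>)"

definition equivalent_cats :: "('a,'b) category \<Rightarrow> ('c,'d) category \<Rightarrow> bool" where
  "equivalent_cats C D \<longleftrightarrow> (\<exists>Fo Fm. is_equivalence C D Fo Fm)"

text \<open>Strong monoidal functors between strict monoidal categories, given by a tensor on
  objects TC, a tensor on morphisms TaC and a unit object IC (the structures below are strict
  since horizontal composition in a strict 2-category is strictly associative and unital).\<close>
definition strong_monoidal ::
  "('a,'b) category \<Rightarrow> ('a \<Rightarrow> 'a \<Rightarrow> 'a) \<Rightarrow> ('b \<Rightarrow> 'b \<Rightarrow> 'b) \<Rightarrow> 'a \<Rightarrow>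
   ('c,'d) category \<Rightarrow> ('c \<Rightarrow> 'c \<Rightarrow> 'c) \<Rightarrow> ('d \<Rightarrow> 'd \<Rightarrow> 'd) \<Rightarrow> 'c \<Rightarrow>
   ('a \<Rightarrow> 'c) \<Rightarrow> ('a \<Rightarrow> 'a \<Rightarrow> 'b \<Rightarrow> 'd) \<Rightarrow> bool" where
  "strong_monoidal C TC TaC IC D TD TaD ID Fo Fm \<longleftrightarrow>
    (\<exists>\<phi>0 \<phi>2. is_iso D ID (Fo IC) \<phi>0 \<and>
      (\<forall>A\<in>cobj C. \<forall>B\<in>cobj C. is_iso D (TD (Fo A) (Fo B)) (Fo (TC A B)) (\<phi>2 A B)) \<and>
      (\<forall>A\<in>cobj C. \<forall>B\<in>cobj C. \<forall>A'\<in>cobj C. \<forall>B'\<in>cobj C. \<forall>f\<in>chom C A A'. \<forall>g\<in>chom C B B'.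
         ccomp D (Fm (TC A B) (TC A' B') (TaC f g)) (\<phi>2 A B) =
         ccomp D (\<phi>2 A' B') (TaD (Fm A A' f) (Fm B B' g))) \<and>
      (\<forall>A\<in>cobj C. \<forall>B\<in>cobj C. \<forall>X\<in>cobj C.
         ccomp D (\<phi>2 (TC A B) X) (TaD (\<phi>2 A B) (cid D (Fo X))) =
         ccomp D (\<phi>2 A (TC B X)) (TaD (cid D (Fo A)) (\<phi>2 B X))) \<and>
      (\<forall>A\<in>cobj C. ccomp D (\<phi>2 IC A) (TaD \<phi>0 (cid D (Fo A))) = cid D (Fo A) \<and>
                   ccomp D (\<phi>2 A IC) (TaD (cid D (Fo A)) \<phi>0) = cid D (Fo A)))"

definition monoidally_equivalent ::
  "('a,'b) category \<Rightarrow> ('a \<Rightarrow> 'a \<Rightarrow> 'a) \<Rightarrow> ('b \<Rightarrow> 'b \<Rightarrow> 'b) \<Rightarrow> 'a \<Rightarrow>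
   ('c,'d) category \<Rightarrow> ('c \<Rightarrow> 'c \<Rightarrow> 'c) \<Rightarrow> ('d \<Rightarrow> 'd \<Rightarrow> 'd) \<Rightarrow> 'c \<Rightarrow> bool" where
  "monoidally_equivalent C TC TaC IC D TD TaD ID \<longleftrightarrow>
    (\<exists>Fo Fm. is_equivalence C D Fo Fm \<and> strong_monoidal C TC TaC IC D TD TaD ID Fo Fm)"

definition mnd_obj :: "('o,'m,'c) twocat \<Rightarrow> 'o \<Rightarrow> 'm \<Rightarrow> 'c \<Rightarrow> 'o \<Rightarrow> 'm \<Rightarrow> 'c \<Rightarrow> ('m \<times> 'c) set" where
  "mnd_obj K k t \<mu> k' t' \<mu>' = {(V,\<psi>). V \<in> hom1 K k k' \<and>
      \<psi> \<in> hom2 K (comp1 K t' V) (comp1 K V t) \<and>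
      vcomp K (wl K V \<mu>) (vcomp K (wr K \<psi> t) (wl K t' \<psi>)) = vcomp K \<psi> (wr K \<mu>' V)}"

definition MndI :: "('o,'m,'c) twocat \<Rightarrow> 'o \<Rightarrow> 'm \<Rightarrow> 'c \<Rightarrow> 'c \<Rightarrow> 'o \<Rightarrow> 'm \<Rightarrow> 'c \<Rightarrow> 'c
     \<Rightarrow> ('m \<times> 'c, 'c) category" where
  "MndI K k t \<mu> \<eta> k' t' \<mu>' \<eta>' =
    \<lparr> cobj = mnd_obj K k t \<mu> k' t' \<mu>',
      chom = (\<lambda>(V,\<psi>) (W,\<phi>). {\<omega> \<in> hom2 K V W.
         vcomp K (wr K \<omega> t) \<psi> =
         vcomp K (wl K W \<mu>) (vcomp K (wr K \<phi> t) (vcomp K (wl K t' (wr K \<omega> t))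
           (vcomp K (wl K t' \<psi>) (wl K t' (wr K \<eta>' V)))))}),
      ccomp = vcomp K,
      cid = (\<lambda>(V,\<psi>). id2 K V) \<rparr>"

definition MndP :: "('o,'m,'c) twocat \<Rightarrow> 'o \<Rightarrow> 'm \<Rightarrow> 'c \<Rightarrow> 'c \<Rightarrow> 'o \<Rightarrow> 'm \<Rightarrow> 'c \<Rightarrow> 'c
     \<Rightarrow> ('m \<times> 'c, 'c) category" where
  "MndP K k t \<mu> \<eta> k' t' \<mu>' \<eta>' =
    \<lparr> cobj = mnd_obj K k t \<mu> k' t' \<mu>',
      chom = (\<lambda>(V,\<psi>) (W,\<phi>). {\<omega> \<in> hom2 K V W.
         vcomp K \<phi> (wl K t' \<omega>) =
         vcomp K (wl K W \<mu>) (vcomp K (wr K \<phi> t) (vcomp K (wr K (wr K \<eta>' W) t)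
           (vcomp K (wr K \<omega> t) \<psi>)))}),
      ccomp = vcomp K,
      cid = (\<lambda>(V,\<psi>). id2 K V) \<rparr>"

definition mnd_tensor :: "('o,'m,'c) twocat \<Rightarrow> 'm \<times> 'c \<Rightarrow> 'm \<times> 'c \<Rightarrow> 'm \<times> 'c" where
  "mnd_tensor K = (\<lambda>(V',\<psi>') (V,\<psi>). (comp1 K V' V, vcomp K (wl K V' \<psi>) (wr K \<psi>' V)))"
definition mnd_unit :: "('o,'m,'c) twocat \<Rightarrow> 'o \<Rightarrow> 'm \<Rightarrow> 'm \<times> 'c" where
  "mnd_unit K k t = (id1 K k, id2 K t)"

text \<open>Weak liftings of 1-cells k \<rightarrow> k' for t,t', with E = J(t), v, E' = J(t'), v'.\<close>
definition lift_obj :: "('o,'m,'c) twocat \<Rightarrow> 'o \<Rightarrow> 'o \<Rightarrow> 'm \<Rightarrow> 'o \<Rightarrow> 'o \<Rightarrow> 'm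
    \<Rightarrow> ('m \<times> 'm \<times> 'c \<times> 'c) set" where
  "lift_obj K k E v k' E' v' = {(V, Vb, \<iota>, \<pi>). V \<in> hom1 K k k' \<and> Vb \<in> hom1 K E E' \<and>
      \<iota> \<in> hom2 K (comp1 K v' Vb) (comp1 K V v) \<and> \<pi> \<in> hom2 K (comp1 K V v) (comp1 K v' Vb) \<and>
      vcomp K \<pi> \<iota> = id2 K (comp1 K v' Vb)}"

definition LiftI :: "('o,'m,'c) twocat \<Rightarrow> 'o \<Rightarrow> 'o \<Rightarrow> 'm \<Rightarrow> 'o \<Rightarrow> 'o \<Rightarrow> 'm
    \<Rightarrow> ('m \<times> 'm \<times> 'c \<times> 'c, 'c \<times> 'c) category" where
  "LiftI K k E v k' E' v' =
    \<lparr> cobj = lift_obj K k E v k' E' v',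
      chom = (\<lambda>(V, Vb, \<iota>1, \<pi>1) (W, Wb, \<iota>2, \<pi>2). {(\<omega>, \<omega>b).
         \<omega> \<in> hom2 K V W \<and> \<omega>b \<in> hom2 K Vb Wb \<and>
         vcomp K \<iota>2 (wl K v' \<omega>b) = vcomp K (wr K \<omega> v) \<iota>1}),
      ccomp = (\<lambda>(\<omega>, \<omega>b) (\<omega>', \<omega>b'). (vcomp K \<omega> \<omega>', vcomp K \<omega>b \<omega>b')),
      cid = (\<lambda>(V, Vb, \<iota>, \<pi>). (id2 K V, id2 K Vb)) \<rparr>"

definition LiftP :: "('o,'m,'c) twocat \<Rightarrow> 'o \<Rightarrow> 'o \<Rightarrow> 'm \<Rightarrow> 'o \<Rightarrow> 'o \<Rightarrow> 'm
    \<Rightarrow> ('m \<times> 'm \<times> 'c \<times> 'c, 'c \<times> 'c) category" where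
  "LiftP K k E v k' E' v' =
    \<lparr> cobj = lift_obj K k E v k' E' v',
      chom = (\<lambda>(V, Vb, \<iota>1, \<pi>1) (W, Wb, \<iota>2, \<pi>2). {(\<omega>, \<omega>b).
         \<omega> \<in> hom2 K V W \<and> \<omega>b \<in> hom2 K Vb Wb \<and>
         vcomp K (wl K v' \<omega>b) \<pi>1 = vcomp K \<pi>2 (wr K \<omega> v)}),
      ccomp = (\<lambda>(\<omega>, \<omega>b) (\<omega>', \<omega>b'). (vcomp K \<omega> \<omega>', vcomp K \<omega>b \<omega>b')),
      cid = (\<lambda>(V, Vb, \<iota>, \<pi>). (id2 K V, id2 K Vb)) \<rparr>"

definition lift_tensor :: "('o,'m,'c) twocat \<Rightarrow> 'm \<times> 'm \<times> 'c \<times> 'c \<Rightarrow> 'm \<times> 'm \<times> 'c \<times> 'c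
    \<Rightarrow> 'm \<times> 'm \<times> 'c \<times> 'c" where
  "lift_tensor K = (\<lambda>(V', Vb', \<iota>', \<pi>') (V, Vb, \<iota>, \<pi>).
     (comp1 K V' V, comp1 K Vb' Vb, vcomp K (wl K V' \<iota>) (wr K \<iota>' Vb),
      vcomp K (wr K \<pi>' Vb) (wl K V' \<pi>)))"
definition lift_tensor_arr :: "('o,'m,'c) twocat \<Rightarrow> 'c \<times> 'c \<Rightarrow> 'c \<times> 'c \<Rightarrow> 'c \<times> 'c" where
  "lift_tensor_arr K = (\<lambda>(\<omega>', \<omega>b') (\<omega>, \<omega>b). (hcomp K \<omega>' \<omega>, hcomp K \<omega>b' \<omega>b))"
definition lift_unit :: "('o,'m,'c) twocat \<Rightarrow> 'o \<Rightarrow> 'o \<Rightarrow> 'm \<Rightarrow> 'm \<times> 'm \<times> 'c \<times> 'c" where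
  "lift_unit K k E v = (id1 K k, id1 K E, id2 K v, id2 K v)"

end

theory Submission
  imports Defs
begin

text \<open>Let \<open>f \<stileturn> v\<close>, with \<open>v : E \<rightarrow> k\<close>, be the Eilenberg--Moore adjunction of \<open>t\<close>. A weak lifting
  \<open>(V, Vb, \<iota>, \<pi>)\<close> exhibits \<open>v' Vb\<close> as a retract of \<open>V v\<close>, so the \<open>t'\<close>-algebra structure of
  \<open>v' Vb\<close> transports to an associative (but in general non-unital) \<open>t'\<close>-action on \<open>V v\<close>;
  transposing it along \<open>f \<stileturn> v\<close> gives a 2-cell \<open>t' V \<Rightarrow> V t\<close> compatible with the multiplications,
  i.e. an object of \<open>Mnd(K)(t, t')\<close>. Conversely, a monad morphism \<open>(V, \<phi>)\<close> yields such an action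
  on \<open>V v\<close>, whose idempotent \<open>\<alpha> \<cdot> \<eta>' V v\<close> splits; the splitting is a \<open>t'\<close>-algebra and hence, by
  the universal property of \<open>E'\<close>, of the form \<open>v' Vb\<close>. This gives essential surjectivity. Both
  hom-conditions of \<open>Mnd\<^sup>\<iota>\<close> and \<open>Mnd\<^sup>\<pi>\<close> are transposes of equations between cells out of \<open>V v\<close>,
  and such a cell lifts along \<open>v'\<close> exactly when it commutes with the \<open>t'\<close>-actions, uniquely since
  \<open>v'\<close> is faithful on 2-cells; so forgetting the lifted 2-cell is fully faithful. The functor is
  the identity on underlying 2-cells and, for \<open>t = t'\<close>, sends composites of liftings to composites
  of the induced 2-cells, so it is strict monoidal.\<close>

section \<open>Equivalences from fully faithful, surjective functors\<close>

locale full_faithful_surjective =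
  fixes C :: "('a,'b) category" and D :: "('c,'d) category"
    and Fo :: "'a \<Rightarrow> 'c" and Fm :: "'a \<Rightarrow> 'a \<Rightarrow> 'b \<Rightarrow> 'd"
  assumes F_functor: "is_functor C D Fo Fm"
    and full: "\<And>A B g. \<lbrakk>A \<in> cobj C; B \<in> cobj C; g \<in> chom D (Fo A) (Fo B)\<rbrakk>
                 \<Longrightarrow> \<exists>f\<in>chom C A B. Fm A B f = g"
    and faithful: "\<And>A B f f'. \<lbrakk>A \<in> cobj C; B \<in> cobj C; f \<in> chom C A B; f' \<in> chom C A B;
                     Fm A B f = Fm A B f'\<rbrakk> \<Longrightarrow> f = f'"
    and surjective: "\<And>Y. Y \<in> cobj D \<Longrightarrow> \<exists>A\<in>cobj C. Fo A = Y"
    and C_id: "\<And>A. A \<in> cobj C \<Longrightarrow> cid C A \<in> chom C A A"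
    and C_comp: "\<And>A B X f g. \<lbrakk>A \<in> cobj C; B \<in> cobj C; X \<in> cobj C; f \<in> chom C A B; g \<in> chom C B X\<rbrakk>
                   \<Longrightarrow> ccomp C g f \<in> chom C A X"
    and D_unit: "\<And>X Y g. \<lbrakk>X \<in> cobj D; Y \<in> cobj D; g \<in> chom D X Y\<rbrakk>
                   \<Longrightarrow> ccomp D (cid D Y) g = g \<and> ccomp D g (cid D X) = g"
begin

lemma Fo_obj: "A \<in> cobj C \<Longrightarrow> Fo A \<in> cobj D"
  and Fm_hom: "\<lbrakk>A \<in> cobj C; B \<in> cobj C; f \<in> chom C A B\<rbrakk> \<Longrightarrow> Fm A B f \<in> chom D (Fo A) (Fo B)"
  and Fm_comp: "\<lbrakk>A \<in> cobj C; B \<in> cobj C; X \<in> cobj C; f \<in> chom C A B; g \<in> chom C B X\<rbrakk>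
                  \<Longrightarrow> Fm A X (ccomp C g f) = ccomp D (Fm B X g) (Fm A B f)"
  and Fm_id: "A \<in> cobj C \<Longrightarrow> Fm A A (cid C A) = cid D (Fo A)"
  using F_functor unfolding is_functor_def by blast+

lemma D_id: "A \<in> cobj C \<Longrightarrow> cid D (Fo A) \<in> chom D (Fo A) (Fo A)"
  using Fm_hom[OF _ _ C_id] Fm_id by metis

definition preimage :: "'c \<Rightarrow> 'a" where
  "preimage Y = (SOME A. A \<in> cobj C \<and> Fo A = Y)"

definition preimage_arr :: "'a \<Rightarrow> 'a \<Rightarrow> 'd \<Rightarrow> 'b" where
  "preimage_arr A B g = (THE f. f \<in> chom C A B \<and> Fm A B f = g)"

lemma preimage: "Y \<in> cobj D \<Longrightarrow> preimage Y \<in> cobj C \<and> Fo (preimage Y) = Y"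
  unfolding preimage_def using surjective by (metis (mono_tags, lifting) someI_ex)

lemma preimage_arr_eq:
  assumes "A \<in> cobj C" "B \<in> cobj C" "f \<in> chom C A B" "Fm A B f = g"
  shows "preimage_arr A B g = f"
  unfolding preimage_arr_def using assms faithful by (intro the_equality) auto

lemma preimage_arr:
  assumes "A \<in> cobj C" "B \<in> cobj C" "g \<in> chom D (Fo A) (Fo B)"
  shows "preimage_arr A B g \<in> chom C A B \<and> Fm A B (preimage_arr A B g) = g"
  using full[OF assms] preimage_arr_eq[OF assms(1,2)] by metis

definition inverse_arr :: "'c \<Rightarrow> 'c \<Rightarrow> 'd \<Rightarrow> 'b" where
  "inverse_arr Y Y' g = preimage_arr (preimage Y) (preimage Y') g"

definition unit_iso :: "'a \<Rightarrow> 'b" where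
  "unit_iso A = preimage_arr A (preimage (Fo A)) (cid D (Fo A))"

lemma unit_iso: "A \<in> cobj C \<Longrightarrow>
    unit_iso A \<in> chom C A (preimage (Fo A)) \<and> Fm A (preimage (Fo A)) (unit_iso A) = cid D (Fo A)"
  unfolding unit_iso_def using preimage_arr preimage Fo_obj D_id by metis

lemma inverse_arr: "\<lbrakk>Y \<in> cobj D; Y' \<in> cobj D; g \<in> chom D Y Y'\<rbrakk>
    \<Longrightarrow> inverse_arr Y Y' g \<in> chom C (preimage Y) (preimage Y') \<and> Fm (preimage Y) (preimage Y') (inverse_arr Y Y' g) = g"
  unfolding inverse_arr_def using preimage preimage_arr by metis

lemma inverse_functor: "is_functor D C preimage inverse_arr"
  unfolding is_functor_def
proof (intro conjI ballI)
  fix A B X f g assume h: "A \<in> cobj D" "B \<in> cobj D" "X \<in> cobj D" "f \<in> chom D A B" "g \<in> chom D B X"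
  have GA: "preimage A \<in> cobj C" "preimage B \<in> cobj C" "preimage X \<in> cobj C"
    using preimage h by auto
  have "Fm (preimage A) (preimage X) (ccomp C (inverse_arr B X g) (inverse_arr A B f)) = ccomp D g f"
    using Fm_comp[OF GA] inverse_arr h by auto
  then show "inverse_arr A X (ccomp D g f) = ccomp C (inverse_arr B X g) (inverse_arr A B f)"
    using preimage_arr_eq GA C_comp inverse_arr h unfolding inverse_arr_def by metis
next
  fix A assume "A \<in> cobj D"
  then show "inverse_arr A A (cid D A) = cid C (preimage A)"
    using preimage_arr_eq C_id Fm_id preimage unfolding inverse_arr_def by metis
qed (use preimage inverse_arr in \<open>auto\<close>)

lemma unit_nat_iso:
  "nat_iso C C (\<lambda>A. A) (\<lambda>A B f. f) (\<lambda>A. preimage (Fo A)) (\<lambda>A B f. inverse_arr (Fo A) (Fo B) (Fm A B f)) unit_iso"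
  unfolding nat_iso_def is_iso_def
proof (intro conjI ballI)
  fix A assume A: "A \<in> cobj C"
  have GA: "preimage (Fo A) \<in> cobj C" "Fo (preimage (Fo A)) = Fo A"
    using preimage Fo_obj A by auto
  define inv where "inv = preimage_arr (preimage (Fo A)) A (cid D (Fo A))"
  have u: "unit_iso A \<in> chom C A (preimage (Fo A))" "Fm A (preimage (Fo A)) (unit_iso A) = cid D (Fo A)"
    using unit_iso[OF A] by auto
  have i: "inv \<in> chom C (preimage (Fo A)) A" "Fm (preimage (Fo A)) A inv = cid D (Fo A)"
    using preimage_arr[OF GA(1) A] D_id[OF A] GA unfolding inv_def by auto
  have DA: "ccomp D (cid D (Fo A)) (cid D (Fo A)) = cid D (Fo A)"
    using D_unit[OF Fo_obj[OF A] Fo_obj[OF A] D_id[OF A]] by blast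
  have "ccomp C inv (unit_iso A) = cid C A"
    using faithful[OF A A C_comp[OF A GA(1) A u(1) i(1)] C_id[OF A]]
      Fm_comp[OF A GA(1) A u(1) i(1)] u i DA Fm_id[OF A] by simp
  moreover have "ccomp C (unit_iso A) inv = cid C (preimage (Fo A))"
    using faithful[OF GA(1) GA(1) C_comp[OF GA(1) A GA(1) i(1) u(1)] C_id[OF GA(1)]]
      Fm_comp[OF GA(1) A GA(1) i(1) u(1)] u i DA Fm_id[OF GA(1)] GA by simp
  ultimately show "\<exists>g\<in>chom C (preimage (Fo A)) A.
      ccomp C g (unit_iso A) = cid C A \<and> ccomp C (unit_iso A) g = cid C (preimage (Fo A))"
    using i by blast
  show "unit_iso A \<in> chom C A (preimage (Fo A))" by (rule u)
next
  fix A B f assume h: "A \<in> cobj C" "B \<in> cobj C" "f \<in> chom C A B"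
  have GA: "preimage (Fo A) \<in> cobj C" "Fo (preimage (Fo A)) = Fo A" "preimage (Fo B) \<in> cobj C" "Fo (preimage (Fo B)) = Fo B"
    using preimage Fo_obj h by auto
  have uA: "unit_iso A \<in> chom C A (preimage (Fo A))" "Fm A (preimage (Fo A)) (unit_iso A) = cid D (Fo A)"
    using unit_iso[OF h(1)] by auto
  have uB: "unit_iso B \<in> chom C B (preimage (Fo B))" "Fm B (preimage (Fo B)) (unit_iso B) = cid D (Fo B)"
    using unit_iso[OF h(2)] by auto
  have gm: "inverse_arr (Fo A) (Fo B) (Fm A B f) \<in> chom C (preimage (Fo A)) (preimage (Fo B))"
      "Fm (preimage (Fo A)) (preimage (Fo B)) (inverse_arr (Fo A) (Fo B) (Fm A B f)) = Fm A B f"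
    using inverse_arr[OF Fo_obj[OF h(1)] Fo_obj[OF h(2)] Fm_hom[OF h]] by auto
  have unit: "ccomp D (cid D (Fo B)) (Fm A B f) = Fm A B f" "ccomp D (Fm A B f) (cid D (Fo A)) = Fm A B f"
    using D_unit[OF Fo_obj[OF h(1)] Fo_obj[OF h(2)] Fm_hom[OF h]] by auto
  show "ccomp C (inverse_arr (Fo A) (Fo B) (Fm A B f)) (unit_iso A) = ccomp C (unit_iso B) f"
    using faithful[OF h(1) GA(3) C_comp[OF h(1) GA(1) GA(3) uA(1) gm(1)] C_comp[OF h(1) h(2) GA(3) h(3) uB(1)]]
      Fm_comp[OF h(1) GA(1) GA(3) uA(1) gm(1)] Fm_comp[OF h(1) h(2) GA(3) h(3) uB(1)] uA uB gm GA unit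
    by simp
qed

lemma counit_nat_iso:
  "nat_iso D D (\<lambda>A. Fo (preimage A)) (\<lambda>A B f. Fm (preimage A) (preimage B) (inverse_arr A B f)) (\<lambda>A. A) (\<lambda>A B f. f) (cid D)"
  unfolding nat_iso_def is_iso_def
proof (intro conjI ballI)
  fix A assume h: "A \<in> cobj D"
  have GA: "preimage A \<in> cobj C" "Fo (preimage A) = A" using preimage h by auto
  have ci: "cid D A \<in> chom D A A" using D_id[OF GA(1)] GA by simp
  show "cid D A \<in> chom D (Fo (preimage A)) A" using ci GA by simp
  show "\<exists>g\<in>chom D A (Fo (preimage A)). ccomp D g (cid D A) = cid D (Fo (preimage A)) \<and> ccomp D (cid D A) g = cid D A"
    using ci GA D_unit[OF h h ci] by auto
next
  fix A B f assume h: "A \<in> cobj D" "B \<in> cobj D" "f \<in> chom D A B"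
  show "ccomp D f (cid D A) = ccomp D (cid D B) (Fm (preimage A) (preimage B) (inverse_arr A B f))"
    using inverse_arr[OF h] D_unit[OF h] by simp
qed

theorem equivalence: "is_equivalence C D Fo Fm"
  unfolding is_equivalence_def
  using F_functor inverse_functor unit_nat_iso counit_nat_iso by blast

end

section \<open>Strict 2-categories\<close>

locale two_category =
  fixes K :: "('o,'m,'c) twocat"
  assumes twocat: "twocat K"
begin

abbreviation vc (infixr "\<cdot>" 55) where "a \<cdot> b \<equiv> vcomp K a b"
abbreviation hc (infixr "\<odot>" 65) where "a \<odot> b \<equiv> hcomp K a b"
abbreviation c1 (infixr "\<bullet>" 70) where "g \<bullet> f \<equiv> comp1 K g f"
abbreviation I2 ("\<one>") where "\<one> f \<equiv> id2 K f"

lemma wl_wr_hcomp: "wl K f a = \<one> f \<odot> a" "wr K a f = a \<odot> \<one> f"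
  unfolding wl_def wr_def by auto

lemma hom1I: "f \<in> arr K \<Longrightarrow> src1 K f = x \<Longrightarrow> tgt1 K f = y \<Longrightarrow> f \<in> hom1 K x y"
  and hom1D: "f \<in> hom1 K x y \<Longrightarrow> f \<in> arr K \<and> src1 K f = x \<and> tgt1 K f = y"
  and hom2I: "a \<in> cell K \<Longrightarrow> src2 K a = f \<Longrightarrow> tgt2 K a = g \<Longrightarrow> a \<in> hom2 K f g"
  and hom2D: "a \<in> hom2 K f g \<Longrightarrow> a \<in> cell K \<and> src2 K a = f \<and> tgt2 K a = g"
  unfolding hom1_def hom2_def by auto

lemma arr_src_tgt_obj: "f \<in> arr K \<Longrightarrow> src1 K f \<in> obj K \<and> tgt1 K f \<in> obj K"
  using twocat unfolding twocat_def by (elim conjE, meson)+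

lemma id1_arr[simp]: "x \<in> obj K \<Longrightarrow> id1 K x \<in> arr K"
  and src1_id1[simp]: "x \<in> obj K \<Longrightarrow> src1 K (id1 K x) = x"
  and tgt1_id1[simp]: "x \<in> obj K \<Longrightarrow> tgt1 K (id1 K x) = x"
  using twocat unfolding twocat_def hom1_def by auto

lemma comp1_arr[simp]: "f \<in> arr K \<Longrightarrow> g \<in> arr K \<Longrightarrow> src1 K g = tgt1 K f \<Longrightarrow> g \<bullet> f \<in> arr K"
  and src1_comp1[simp]: "f \<in> arr K \<Longrightarrow> g \<in> arr K \<Longrightarrow> src1 K g = tgt1 K f \<Longrightarrow> src1 K (g \<bullet> f) = src1 K f"
  and tgt1_comp1[simp]: "f \<in> arr K \<Longrightarrow> g \<in> arr K \<Longrightarrow> src1 K g = tgt1 K f \<Longrightarrow> tgt1 K (g \<bullet> f) = tgt1 K g"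
  using twocat unfolding twocat_def hom1_def by auto

lemma comp1_assoc[simp]:
  "f \<in> arr K \<Longrightarrow> g \<in> arr K \<Longrightarrow> h \<in> arr K \<Longrightarrow> src1 K h = tgt1 K g \<Longrightarrow> src1 K g = tgt1 K f
  \<Longrightarrow> (h \<bullet> g) \<bullet> f = h \<bullet> (g \<bullet> f)"
  using twocat unfolding twocat_def by (elim conjE, meson)+

lemma comp1_id_left[simp]: "f \<in> arr K \<Longrightarrow> tgt1 K f = x \<Longrightarrow> id1 K x \<bullet> f = f"
  and comp1_id_right[simp]: "f \<in> arr K \<Longrightarrow> src1 K f = x \<Longrightarrow> f \<bullet> id1 K x = f"
  using twocat unfolding twocat_def by (elim conjE, meson)+

lemma cell_src_tgt: "a \<in> cell K \<Longrightarrow> src2 K a \<in> arr K \<and> tgt2 K a \<in> arr K \<and>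
    src1 K (src2 K a) = src1 K (tgt2 K a) \<and> tgt1 K (src2 K a) = tgt1 K (tgt2 K a)"
  using twocat unfolding twocat_def by (elim conjE, meson)+

lemma id2_cell[simp]: "f \<in> arr K \<Longrightarrow> \<one> f \<in> cell K"
  and src2_id2[simp]: "f \<in> arr K \<Longrightarrow> src2 K (\<one> f) = f"
  and tgt2_id2[simp]: "f \<in> arr K \<Longrightarrow> tgt2 K (\<one> f) = f"
  using twocat unfolding twocat_def hom2_def by auto

lemma vcomp_cell[simp]: "a \<in> cell K \<Longrightarrow> b \<in> cell K \<Longrightarrow> src2 K a = tgt2 K b \<Longrightarrow> a \<cdot> b \<in> cell K"
  and src2_vcomp[simp]: "a \<in> cell K \<Longrightarrow> b \<in> cell K \<Longrightarrow> src2 K a = tgt2 K b \<Longrightarrow> src2 K (a \<cdot> b) = src2 K b"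
  and tgt2_vcomp[simp]: "a \<in> cell K \<Longrightarrow> b \<in> cell K \<Longrightarrow> src2 K a = tgt2 K b \<Longrightarrow> tgt2 K (a \<cdot> b) = tgt2 K a"
  using twocat unfolding twocat_def hom2_def by auto

lemma vcomp_assoc[simp]:
  "a \<in> cell K \<Longrightarrow> b \<in> cell K \<Longrightarrow> c \<in> cell K \<Longrightarrow> src2 K a = tgt2 K b \<Longrightarrow> src2 K b = tgt2 K c
  \<Longrightarrow> (a \<cdot> b) \<cdot> c = a \<cdot> (b \<cdot> c)"
  using twocat unfolding twocat_def by (elim conjE, meson)+

lemma vcomp_id_left[simp]: "a \<in> cell K \<Longrightarrow> tgt2 K a = f \<Longrightarrow> \<one> f \<cdot> a = a"
  and vcomp_id_right[simp]: "a \<in> cell K \<Longrightarrow> src2 K a = f \<Longrightarrow> a \<cdot> \<one> f = a"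
  using twocat unfolding twocat_def by (elim conjE, meson)+

lemma hcomp_cell[simp]:
    "a \<in> cell K \<Longrightarrow> b \<in> cell K \<Longrightarrow> src1 K (src2 K a) = tgt1 K (src2 K b) \<Longrightarrow> a \<odot> b \<in> cell K"
  and src2_hcomp[simp]: "a \<in> cell K \<Longrightarrow> b \<in> cell K \<Longrightarrow> src1 K (src2 K a) = tgt1 K (src2 K b)
    \<Longrightarrow> src2 K (a \<odot> b) = src2 K a \<bullet> src2 K b"
  and tgt2_hcomp[simp]: "a \<in> cell K \<Longrightarrow> b \<in> cell K \<Longrightarrow> src1 K (src2 K a) = tgt1 K (src2 K b)
    \<Longrightarrow> tgt2 K (a \<odot> b) = tgt2 K a \<bullet> tgt2 K b"
  using twocat unfolding twocat_def hom2_def by auto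

lemma hcomp_assoc[simp]: "a \<in> cell K \<Longrightarrow> b \<in> cell K \<Longrightarrow> c \<in> cell K \<Longrightarrow>
    src1 K (src2 K a) = tgt1 K (src2 K b) \<Longrightarrow> src1 K (src2 K b) = tgt1 K (src2 K c) \<Longrightarrow>
    (a \<odot> b) \<odot> c = a \<odot> (b \<odot> c)"
  using twocat unfolding twocat_def by (elim conjE, meson)+

lemma hcomp_id_left[simp]: "a \<in> cell K \<Longrightarrow> tgt1 K (src2 K a) = x \<Longrightarrow> \<one> (id1 K x) \<odot> a = a"
  and hcomp_id_right[simp]: "a \<in> cell K \<Longrightarrow> src1 K (src2 K a) = x \<Longrightarrow> a \<odot> \<one> (id1 K x) = a"
  using twocat unfolding twocat_def by (elim conjE, meson)+

lemma hcomp_id2[simp]: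
  "f \<in> arr K \<Longrightarrow> g \<in> arr K \<Longrightarrow> src1 K g = tgt1 K f \<Longrightarrow> \<one> g \<odot> \<one> f = \<one> (g \<bullet> f)"
  using twocat unfolding twocat_def by (elim conjE, meson)+

lemma interchange: "a \<in> cell K \<Longrightarrow> a' \<in> cell K \<Longrightarrow> b \<in> cell K \<Longrightarrow> b' \<in> cell K \<Longrightarrow>
    src2 K a = tgt2 K a' \<Longrightarrow> src2 K b = tgt2 K b' \<Longrightarrow> src1 K (src2 K a) = tgt1 K (src2 K b) \<Longrightarrow>
    (a \<cdot> a') \<odot> (b \<cdot> b') = (a \<odot> b) \<cdot> (a' \<odot> b')"
  using twocat unfolding twocat_def by (elim conjE, meson)+

lemma whisker_left_vcomp[simp]:
  assumes "f \<in> arr K" "a \<in> cell K" "b \<in> cell K" "src2 K a = tgt2 K b" "src1 K f = tgt1 K (src2 K b)"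
  shows "\<one> f \<odot> (a \<cdot> b) = (\<one> f \<odot> a) \<cdot> (\<one> f \<odot> b)"
proof -
  have "\<one> f \<odot> (a \<cdot> b) = (\<one> f \<cdot> \<one> f) \<odot> (a \<cdot> b)" using assms by simp
  also have "\<dots> = (\<one> f \<odot> a) \<cdot> (\<one> f \<odot> b)"
    using assms cell_src_tgt by (intro interchange) auto
  finally show ?thesis .
qed

lemma whisker_right_vcomp[simp]:
  assumes "f \<in> arr K" "a \<in> cell K" "b \<in> cell K" "src2 K a = tgt2 K b" "tgt1 K f = src1 K (src2 K b)"
  shows "(a \<cdot> b) \<odot> \<one> f = (a \<odot> \<one> f) \<cdot> (b \<odot> \<one> f)"
proof -
  have "(a \<cdot> b) \<odot> \<one> f = (a \<cdot> b) \<odot> (\<one> f \<cdot> \<one> f)" using assms by simp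
  also have "\<dots> = (a \<odot> \<one> f) \<cdot> (b \<odot> \<one> f)"
    using assms cell_src_tgt by (intro interchange) auto
  finally show ?thesis .
qed

lemma whisker_left_comp1[simp]:
  "f \<in> arr K \<Longrightarrow> g \<in> arr K \<Longrightarrow> a \<in> cell K \<Longrightarrow> src1 K g = tgt1 K f \<Longrightarrow> src1 K f = tgt1 K (src2 K a)
  \<Longrightarrow> \<one> (g \<bullet> f) \<odot> a = \<one> g \<odot> (\<one> f \<odot> a)"
  by (subst hcomp_assoc[symmetric]) auto

lemma whisker_exchange:
  assumes "a \<in> cell K" "b \<in> cell K" "src1 K (src2 K a) = tgt1 K (src2 K b)"
  shows "(a \<odot> \<one> (tgt2 K b)) \<cdot> (\<one> (src2 K a) \<odot> b) = (\<one> (tgt2 K a) \<odot> b) \<cdot> (a \<odot> \<one> (src2 K b))"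
proof -
  note c = cell_src_tgt[OF assms(1)] cell_src_tgt[OF assms(2)]
  have "(a \<odot> \<one> (tgt2 K b)) \<cdot> (\<one> (src2 K a) \<odot> b) = (a \<cdot> \<one> (src2 K a)) \<odot> (\<one> (tgt2 K b) \<cdot> b)"
    using assms c by (subst interchange) auto
  also have "\<dots> = (\<one> (tgt2 K a) \<cdot> a) \<odot> (b \<cdot> \<one> (src2 K b))" using assms c by simp
  also have "\<dots> = (\<one> (tgt2 K a) \<odot> b) \<cdot> (a \<odot> \<one> (src2 K b))"
    using assms c by (subst interchange) auto
  finally show ?thesis .
qed

text \<open>The next two lemmas let the simplifier use an equation between composites inside a
  longer right-associated vertical composite.\<close>

lemma vcomp_reassoc: "x \<cdot> y = z \<Longrightarrow> x \<in> cell K \<Longrightarrow> y \<in> cell K \<Longrightarrow> src2 K x = tgt2 K y \<Longrightarrow>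
    r \<in> cell K \<Longrightarrow> src2 K y = tgt2 K r \<Longrightarrow> x \<cdot> (y \<cdot> r) = z \<cdot> r"
  by (subst vcomp_assoc[symmetric]) auto

lemma vcomp_reassoc3: "x \<cdot> y \<cdot> w = z \<Longrightarrow> x \<in> cell K \<Longrightarrow> y \<in> cell K \<Longrightarrow> w \<in> cell K \<Longrightarrow>
    src2 K x = tgt2 K y \<Longrightarrow> src2 K y = tgt2 K w \<Longrightarrow> r \<in> cell K \<Longrightarrow> src2 K w = tgt2 K r \<Longrightarrow>
    x \<cdot> (y \<cdot> (w \<cdot> r)) = z \<cdot> r"
  by (subst vcomp_assoc[symmetric], simp_all, subst vcomp_assoc[symmetric], auto)

lemma whisker_cong: "a = b \<Longrightarrow> \<one> W \<odot> (a \<odot> \<one> X) = \<one> W \<odot> (b \<odot> \<one> X)"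
  by simp

end

section \<open>Monads, algebras and Eilenberg--Moore objects\<close>

locale monad_in = two_category +
  fixes k t \<mu> \<eta>
  assumes monad: "is_monad K k t \<mu> \<eta>"
begin

lemma k_obj[simp]: "k \<in> obj K"
  and t_arr[simp]: "t \<in> arr K" "src1 K t = k" "tgt1 K t = k"
  and mu_cell[simp]: "\<mu> \<in> cell K" "src2 K \<mu> = t \<bullet> t" "tgt2 K \<mu> = t"
  and eta_cell[simp]: "\<eta> \<in> cell K" "src2 K \<eta> = id1 K k" "tgt2 K \<eta> = t"
  using monad unfolding is_monad_def hom1_def hom2_def by auto

lemma mu_assoc: "\<mu> \<cdot> (\<one> t \<odot> \<mu>) = \<mu> \<cdot> (\<mu> \<odot> \<one> t)"
  and mu_wl_eta: "\<mu> \<cdot> (\<one> t \<odot> \<eta>) = \<one> t"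
  and mu_wr_eta: "\<mu> \<cdot> (\<eta> \<odot> \<one> t) = \<one> t"
  using monad unfolding is_monad_def wl_wr_hcomp by auto

lemma mu_unit_whisker:
  assumes "Y \<in> arr K" "tgt1 K Y = k"
  shows "(\<mu> \<odot> \<one> Y) \<cdot> (\<one> t \<odot> (\<eta> \<odot> \<one> Y)) = \<one> (t \<bullet> Y)"
    and "(\<mu> \<odot> \<one> Y) \<cdot> (\<eta> \<odot> \<one> (t \<bullet> Y)) = \<one> (t \<bullet> Y)"
  using whisker_cong[OF mu_wl_eta, of "id1 K k" Y] whisker_cong[OF mu_wr_eta, of "id1 K k" Y] assms
  by simp_all

lemma eta_natural: "a \<in> cell K \<Longrightarrow> tgt1 K (src2 K a) = k \<Longrightarrow>
    (\<one> t \<odot> a) \<cdot> (\<eta> \<odot> \<one> (src2 K a)) = (\<eta> \<odot> \<one> (tgt2 K a)) \<cdot> a"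
  using whisker_exchange[of \<eta> a] cell_src_tgt[of a] by simp

lemma action_eta_idem:
  assumes Y: "Y \<in> arr K" "tgt1 K Y = k"
    and \<alpha>: "\<alpha> \<in> hom2 K (t \<bullet> Y) Y"
    and \<alpha>_assoc: "\<alpha> \<cdot> (\<one> t \<odot> \<alpha>) = \<alpha> \<cdot> (\<mu> \<odot> \<one> Y)"
  shows "\<alpha> \<cdot> (\<eta> \<odot> \<one> Y) \<cdot> \<alpha> = \<alpha>"
proof -
  note [simp] = hom2D[OF \<alpha>]
  have eta_nat: "(\<eta> \<odot> \<one> Y) \<cdot> \<alpha> = (\<one> t \<odot> \<alpha>) \<cdot> (\<eta> \<odot> \<one> (t \<bullet> Y))"
    using whisker_exchange[of \<eta> \<alpha>] Y by simp
  show ?thesis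
    using Y by (simp add: eta_nat \<alpha>_assoc vcomp_reassoc[OF \<alpha>_assoc] mu_unit_whisker(2)[OF Y])
qed

context
  fixes Y \<alpha> X \<iota> \<pi>
  assumes Y: "Y \<in> arr K" "tgt1 K Y = k"
    and \<alpha>: "\<alpha> \<in> hom2 K (t \<bullet> Y) Y"
    and \<alpha>_assoc: "\<alpha> \<cdot> (\<one> t \<odot> \<alpha>) = \<alpha> \<cdot> (\<mu> \<odot> \<one> Y)"
    and \<iota>: "\<iota> \<in> hom2 K X Y" and \<pi>: "\<pi> \<in> hom2 K Y X"
    and split: "\<iota> \<cdot> \<pi> = \<alpha> \<cdot> (\<eta> \<odot> \<one> Y)" and retract: "\<pi> \<cdot> \<iota> = \<one> X"
begin

lemma split_cells: "X \<in> arr K" "src1 K X = src1 K Y" "tgt1 K X = k"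
  "\<alpha> \<in> cell K" "src2 K \<alpha> = t \<bullet> Y" "tgt2 K \<alpha> = Y"
  "\<iota> \<in> cell K" "src2 K \<iota> = X" "tgt2 K \<iota> = Y" "\<pi> \<in> cell K" "src2 K \<pi> = Y" "tgt2 K \<pi> = X"
  using cell_src_tgt[of \<iota>] hom2D[OF \<alpha>] hom2D[OF \<iota>] hom2D[OF \<pi>] Y by auto

lemma split_whisker: "(\<one> t \<odot> \<iota>) \<cdot> (\<one> t \<odot> \<pi>) = (\<one> t \<odot> \<alpha>) \<cdot> (\<one> t \<odot> (\<eta> \<odot> \<one> Y))"
  using whisker_cong[OF split, of t "id1 K (src1 K Y)"] Y split_cells by simp

lemma split_action_alg: "is_alg K k t \<mu> \<eta> (src1 K Y) X (\<pi> \<cdot> \<alpha> \<cdot> (\<one> t \<odot> \<iota>))"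
proof -
  note [simp] = split_cells
  note mu_t_eta = mu_unit_whisker(1)[OF Y]
  define \<beta> where "\<beta> = \<pi> \<cdot> \<alpha> \<cdot> (\<one> t \<odot> \<iota>)"
  have [simp]: "\<beta> \<in> cell K" "src2 K \<beta> = t \<bullet> X" "tgt2 K \<beta> = X"
    unfolding \<beta>_def using Y by auto
  have eta_\<iota>: "(\<one> t \<odot> \<iota>) \<cdot> (\<eta> \<odot> \<one> X) = (\<eta> \<odot> \<one> Y) \<cdot> \<iota>"
    using eta_natural[of \<iota>] by simp
  have mu_\<iota>: "(\<one> t \<odot> \<iota>) \<cdot> (\<mu> \<odot> \<one> X) = (\<mu> \<odot> \<one> Y) \<cdot> (\<one> t \<odot> (\<one> t \<odot> \<iota>))"
    using whisker_exchange[of \<mu> \<iota>] by simp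
  have \<beta>_unit: "\<beta> \<cdot> (\<eta> \<odot> \<one> X) = \<one> X"
    unfolding \<beta>_def using Y
    by (simp add: eta_\<iota> vcomp_reassoc[OF eta_\<iota>] split[symmetric] vcomp_reassoc[OF split[symmetric]]
        retract vcomp_reassoc[OF retract])
  have \<beta>_assoc: "\<beta> \<cdot> (\<one> t \<odot> \<beta>) = \<beta> \<cdot> (\<mu> \<odot> \<one> X)"
    unfolding \<beta>_def using Y
    by (simp add: split_whisker vcomp_reassoc[OF split_whisker] \<alpha>_assoc vcomp_reassoc[OF \<alpha>_assoc]
        mu_t_eta vcomp_reassoc[OF mu_t_eta] mu_\<iota> vcomp_reassoc[OF mu_\<iota>])
  show ?thesis
    unfolding is_alg_def wl_wr_hcomp \<beta>_def[symmetric] using \<beta>_unit \<beta>_assoc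
    by (auto intro!: hom1I hom2I)
qed

lemma split_action_recovers: "\<iota> \<cdot> (\<pi> \<cdot> \<alpha> \<cdot> (\<one> t \<odot> \<iota>)) \<cdot> (\<one> t \<odot> \<pi>) = \<alpha>"
proof -
  note [simp] = split_cells
  note mu_t_eta = mu_unit_whisker(1)[OF Y]
  have "\<iota> \<cdot> (\<pi> \<cdot> \<alpha> \<cdot> (\<one> t \<odot> \<iota>)) \<cdot> (\<one> t \<odot> \<pi>) = \<alpha> \<cdot> (\<eta> \<odot> \<one> Y) \<cdot> \<alpha> \<cdot> (\<one> t \<odot> \<iota>) \<cdot> (\<one> t \<odot> \<pi>)"
    using Y by (simp add: vcomp_reassoc[OF split])
  also have "\<dots> = \<alpha> \<cdot> (\<one> t \<odot> \<iota>) \<cdot> (\<one> t \<odot> \<pi>)"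
    by (rule vcomp_reassoc3[OF action_eta_idem[OF Y \<alpha> \<alpha>_assoc]]) (use Y in simp_all)
  also have "\<dots> = \<alpha> \<cdot> (\<one> t \<odot> \<alpha>) \<cdot> (\<one> t \<odot> (\<eta> \<odot> \<one> Y))"
    by (simp only: split_whisker)
  also have "\<dots> = \<alpha>"
    using Y by (simp add: \<alpha>_assoc vcomp_reassoc[OF \<alpha>_assoc] mu_t_eta)
  finally show ?thesis .
qed

end

end

locale EM_object = monad_in +
  fixes E v \<psi>
  assumes EM: "is_EM K k t \<mu> \<eta> E v \<psi>"
begin

lemma E_obj[simp]: "E \<in> obj K"
  and v_arr[simp]: "v \<in> arr K" "src1 K v = E" "tgt1 K v = k"
  and psi_cell[simp]: "\<psi> \<in> cell K" "src2 K \<psi> = t \<bullet> v" "tgt2 K \<psi> = v"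
  using EM unfolding is_EM_def is_alg_def hom1_def hom2_def by auto

lemma psi_assoc: "\<psi> \<cdot> (\<one> t \<odot> \<psi>) = \<psi> \<cdot> (\<mu> \<odot> \<one> v)"
  and psi_unit: "\<psi> \<cdot> (\<eta> \<odot> \<one> v) = \<one> v"
  using EM unfolding is_EM_def is_alg_def wl_wr_hcomp by auto

lemma EM_univ_arr: "x \<in> obj K \<Longrightarrow> is_alg K k t \<mu> \<eta> x a \<alpha>
    \<Longrightarrow> \<exists>!g. g \<in> hom1 K x E \<and> v \<bullet> g = a \<and> \<psi> \<odot> \<one> g = \<alpha>"
  using EM unfolding is_EM_def wl_wr_hcomp by blast

lemma EM_univ_cell: "x \<in> obj K \<Longrightarrow> g \<in> hom1 K x E \<Longrightarrow> h \<in> hom1 K x E \<Longrightarrow>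
    \<rho> \<in> hom2 K (v \<bullet> g) (v \<bullet> h) \<Longrightarrow> (\<psi> \<odot> \<one> h) \<cdot> (\<one> t \<odot> \<rho>) = \<rho> \<cdot> (\<psi> \<odot> \<one> g)
    \<Longrightarrow> \<exists>!\<theta>. \<theta> \<in> hom2 K g h \<and> \<one> v \<odot> \<theta> = \<rho>"
  using EM unfolding is_EM_def wl_wr_hcomp by blast

lemma free_alg: "is_alg K k t \<mu> \<eta> k t \<mu>"
  unfolding is_alg_def wl_wr_hcomp using mu_assoc mu_wr_eta by (auto intro: hom1I hom2I)

text \<open>The left adjoint \<open>f \<stileturn> v\<close> classifies the free algebra \<open>(t, \<mu>)\<close>; its counit \<open>eps\<close>
  is the unique 2-cell with \<open>v eps = \<psi>\<close>.\<close>

definition f where "f = (SOME g. g \<in> hom1 K k E \<and> v \<bullet> g = t \<and> \<psi> \<odot> \<one> g = \<mu>)"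

lemma f_props: "f \<in> hom1 K k E \<and> v \<bullet> f = t \<and> \<psi> \<odot> \<one> f = \<mu>"
  unfolding f_def using EM_univ_arr[OF k_obj free_alg] by (rule someI_ex[OF ex1_implies_ex])

lemma f_arr[simp]: "f \<in> arr K" "src1 K f = k" "tgt1 K f = E"
  and v_f[simp]: "v \<bullet> f = t"
  and psi_f[simp]: "\<psi> \<odot> \<one> f = \<mu>"
  using f_props unfolding hom1_def by auto

lemma v_f_comp1[simp]: "X \<in> arr K \<Longrightarrow> tgt1 K X = k \<Longrightarrow> v \<bullet> (f \<bullet> X) = t \<bullet> X"
  by (subst comp1_assoc[symmetric]) auto

lemma psi_f_comp1[simp]:
  assumes "X \<in> arr K" "tgt1 K X = k"
  shows "\<psi> \<odot> \<one> (f \<bullet> X) = \<mu> \<odot> \<one> X"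
proof -
  have "\<psi> \<odot> \<one> (f \<bullet> X) = \<psi> \<odot> (\<one> f \<odot> \<one> X)" using assms by simp
  also have "\<dots> = (\<psi> \<odot> \<one> f) \<odot> \<one> X" using assms by (subst hcomp_assoc) auto
  finally show ?thesis by simp
qed

lemma v_f_whisker[simp]: "a \<in> cell K \<Longrightarrow> tgt1 K (src2 K a) = k \<Longrightarrow> \<one> v \<odot> (\<one> f \<odot> a) = \<one> t \<odot> a"
  by (subst whisker_left_comp1[symmetric]) auto

definition eps where "eps = (SOME \<theta>. \<theta> \<in> hom2 K (f \<bullet> v) (id1 K E) \<and> \<one> v \<odot> \<theta> = \<psi>)"

lemma eps_props: "eps \<in> hom2 K (f \<bullet> v) (id1 K E) \<and> \<one> v \<odot> eps = \<psi>"
proof -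
  have "\<exists>!\<theta>. \<theta> \<in> hom2 K (f \<bullet> v) (id1 K E) \<and> \<one> v \<odot> \<theta> = \<psi>"
    by (rule EM_univ_cell) (auto intro: hom1I hom2I simp: psi_assoc)
  then show ?thesis unfolding eps_def by (rule someI_ex[OF ex1_implies_ex])
qed

lemma eps_cell[simp]: "eps \<in> cell K" "src2 K eps = f \<bullet> v" "tgt2 K eps = id1 K E"
  and v_eps[simp]: "\<one> v \<odot> eps = \<psi>"
  using eps_props unfolding hom2_def by auto

lemma v_eps_whisker[simp]: "X \<in> arr K \<Longrightarrow> tgt1 K X = E \<Longrightarrow> \<one> v \<odot> (eps \<odot> \<one> X) = \<psi> \<odot> \<one> X"
  by (subst hcomp_assoc[symmetric]) auto

text \<open>Transposition \<open>\<beta> \<mapsto> \<beta>f \<cdot> Y\<eta>\<close> along \<open>f \<stileturn> v\<close>, with its inverse given by the counit.\<close>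

lemma transpose_inverse:
  assumes "Y \<in> arr K" "src1 K Y = k" "\<beta> \<in> hom2 K (Y \<bullet> v) Z"
  shows "\<beta> = (\<one> Z \<odot> eps) \<cdot> (\<beta> \<odot> \<one> (f \<bullet> v)) \<cdot> (\<one> Y \<odot> (\<eta> \<odot> \<one> v))"
proof -
  note hb = hom2D[OF assms(3)]
  have Z: "Z \<in> arr K" "src1 K Z = E" "tgt1 K Z = tgt1 K Y" using cell_src_tgt[of \<beta>] hb assms by auto
  have counit: "(\<one> Z \<odot> eps) \<cdot> (\<beta> \<odot> \<one> (f \<bullet> v)) = \<beta> \<cdot> (\<one> Y \<odot> \<psi>)"
    using whisker_exchange[of \<beta> eps] hb assms Z by simp
  have unit: "(\<one> Y \<odot> \<psi>) \<cdot> (\<one> Y \<odot> (\<eta> \<odot> \<one> v)) = \<one> (Y \<bullet> v)"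
    using whisker_cong[OF psi_unit, of Y "id1 K E"] assms by simp
  show ?thesis
    using hb assms Z by (simp add: counit vcomp_reassoc[OF counit] unit)
qed

lemma transpose_inj:
  assumes "Y \<in> arr K" "src1 K Y = k" "\<beta>1 \<in> hom2 K (Y \<bullet> v) Z" "\<beta>2 \<in> hom2 K (Y \<bullet> v) Z"
    and eq: "(\<beta>1 \<odot> \<one> f) \<cdot> (\<one> Y \<odot> \<eta>) = (\<beta>2 \<odot> \<one> f) \<cdot> (\<one> Y \<odot> \<eta>)"
  shows "\<beta>1 = \<beta>2"
proof -
  note hb = hom2D[OF assms(3)] hom2D[OF assms(4)]
  have Z: "Z \<in> arr K" "src1 K Z = E" "tgt1 K Z = tgt1 K Y"
    using cell_src_tgt[of \<beta>1] hb assms by auto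
  have "((\<beta>1 \<odot> \<one> f) \<cdot> (\<one> Y \<odot> \<eta>)) \<odot> \<one> v = ((\<beta>2 \<odot> \<one> f) \<cdot> (\<one> Y \<odot> \<eta>)) \<odot> \<one> v"
    using eq by simp
  then have "(\<beta>1 \<odot> \<one> (f \<bullet> v)) \<cdot> (\<one> Y \<odot> (\<eta> \<odot> \<one> v)) = (\<beta>2 \<odot> \<one> (f \<bullet> v)) \<cdot> (\<one> Y \<odot> (\<eta> \<odot> \<one> v))"
    using hb assms(1-4) Z by simp
  then show ?thesis
    using transpose_inverse[OF assms(1,2,3)] transpose_inverse[OF assms(1,2,4)] by simp
qed

lemma psi_whisker_natural:
  assumes "\<theta> \<in> hom2 K g h" "g \<in> hom1 K x E" "h \<in> hom1 K x E"
  shows "(\<psi> \<odot> \<one> h) \<cdot> (\<one> t \<odot> (\<one> v \<odot> \<theta>)) = (\<one> v \<odot> \<theta>) \<cdot> (\<psi> \<odot> \<one> g)"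
proof -
  note hh = hom2D[OF assms(1)] hom1D[OF assms(2)] hom1D[OF assms(3)]
  have "(eps \<odot> \<one> h) \<cdot> (\<one> (f \<bullet> v) \<odot> \<theta>) = (\<one> (id1 K E) \<odot> \<theta>) \<cdot> (eps \<odot> \<one> g)"
    using whisker_exchange[of eps \<theta>] hh by simp
  then have "\<one> v \<odot> (((eps \<odot> \<one> h) \<cdot> (\<one> (f \<bullet> v) \<odot> \<theta>)) \<odot> \<one> (id1 K x)) =
      \<one> v \<odot> (((\<one> (id1 K E) \<odot> \<theta>) \<cdot> (eps \<odot> \<one> g)) \<odot> \<one> (id1 K x))"
    by (rule whisker_cong)
  then show ?thesis using hh by simp
qed

lemma v_faithful:
  assumes "\<theta>1 \<in> hom2 K g h" "\<theta>2 \<in> hom2 K g h" "g \<in> hom1 K x E" "h \<in> hom1 K x E"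
    and "\<one> v \<odot> \<theta>1 = \<one> v \<odot> \<theta>2"
  shows "\<theta>1 = \<theta>2"
proof -
  note hh = hom2D[OF assms(1)] hom1D[OF assms(3)] hom1D[OF assms(4)]
  have "\<exists>!\<theta>. \<theta> \<in> hom2 K g h \<and> \<one> v \<odot> \<theta> = \<one> v \<odot> \<theta>1"
  proof (rule EM_univ_cell[OF _ assms(3,4)])
    show "x \<in> obj K" using hh arr_src_tgt_obj by auto
    show "\<one> v \<odot> \<theta>1 \<in> hom2 K (v \<bullet> g) (v \<bullet> h)" using hh by (intro hom2I) simp_all
  qed (rule psi_whisker_natural[OF assms(1,3,4)])
  then show ?thesis using the1_equality assms(1,2,5) by metis
qed

lemma v_full:
  assumes "g \<in> hom1 K x E" "h \<in> hom1 K x E" "\<rho> \<in> hom2 K (v \<bullet> g) (v \<bullet> h)"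
    and "(\<psi> \<odot> \<one> h) \<cdot> (\<one> t \<odot> \<rho>) = \<rho> \<cdot> (\<psi> \<odot> \<one> g)"
  shows "\<exists>\<theta>. \<theta> \<in> hom2 K g h \<and> \<one> v \<odot> \<theta> = \<rho>"
proof -
  have "x \<in> obj K" using assms(1) hom1D arr_src_tgt_obj by blast
  from ex1_implies_ex[OF EM_univ_cell[OF this assms]] show ?thesis .
qed

end

section \<open>The monad morphism induced by a weak lifting\<close>

locale EM_pair = two_category K +
  A: EM_object K k t \<mu> \<eta> E v \<psi> + B: EM_object K k' t' \<mu>' \<eta>' E' v' \<psi>'
  for K :: "('o,'m,'c) twocat" and k t \<mu> \<eta> E v \<psi> k' t' \<mu>' \<eta>' E' v' \<psi>'
begin

definition lifted_action :: "'m \<Rightarrow> 'm \<Rightarrow> 'c \<Rightarrow> 'c \<Rightarrow> 'c" where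
  "lifted_action V Vb \<iota> \<pi> = \<iota> \<cdot> (\<psi>' \<odot> \<one> Vb) \<cdot> (\<one> t' \<odot> \<pi>)"

definition induced_law :: "'m \<Rightarrow> 'm \<Rightarrow> 'c \<Rightarrow> 'c \<Rightarrow> 'c" where
  "induced_law V Vb \<iota> \<pi> = (lifted_action V Vb \<iota> \<pi> \<odot> \<one> A.f) \<cdot> (\<one> t' \<odot> (\<one> V \<odot> \<eta>))"

definition lift_to_mnd_obj :: "'m \<times> 'm \<times> 'c \<times> 'c \<Rightarrow> 'm \<times> 'c" where
  "lift_to_mnd_obj = (\<lambda>(V, Vb, \<iota>, \<pi>). (V, induced_law V Vb \<iota> \<pi>))"

definition lift_to_mnd_arr :: "'m \<times> 'm \<times> 'c \<times> 'c \<Rightarrow> 'm \<times> 'm \<times> 'c \<times> 'c \<Rightarrow> 'c \<times> 'c \<Rightarrow> 'c" where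
  "lift_to_mnd_arr = (\<lambda>A B (\<omega>, \<omega>b). \<omega>)"

end

locale weak_lifting = EM_pair +
  fixes V Vb \<iota> \<pi>
  assumes lift: "(V, Vb, \<iota>, \<pi>) \<in> lift_obj K k E v k' E' v'"
begin

abbreviation "\<alpha> \<equiv> lifted_action V Vb \<iota> \<pi>"
abbreviation "\<psi>V \<equiv> induced_law V Vb \<iota> \<pi>"

lemma V_arr[simp]: "V \<in> arr K" "src1 K V = k" "tgt1 K V = k'"
  and Vb_arr[simp]: "Vb \<in> arr K" "src1 K Vb = E" "tgt1 K Vb = E'"
  and iota_cell[simp]: "\<iota> \<in> cell K" "src2 K \<iota> = v' \<bullet> Vb" "tgt2 K \<iota> = V \<bullet> v"
  and pi_cell[simp]: "\<pi> \<in> cell K" "src2 K \<pi> = V \<bullet> v" "tgt2 K \<pi> = v' \<bullet> Vb"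
  and pi_iota: "\<pi> \<cdot> \<iota> = \<one> (v' \<bullet> Vb)"
  using lift unfolding lift_obj_def hom1_def hom2_def by auto

lemma LiftI_id: "(\<one> V, \<one> Vb) \<in> chom (LiftI K k E v k' E' v') (V, Vb, \<iota>, \<pi>) (V, Vb, \<iota>, \<pi>)"
  unfolding LiftI_def wl_wr_hcomp by (auto intro!: hom2I)

lemma LiftP_id: "(\<one> V, \<one> Vb) \<in> chom (LiftP K k E v k' E' v') (V, Vb, \<iota>, \<pi>) (V, Vb, \<iota>, \<pi>)"
  unfolding LiftP_def wl_wr_hcomp by (auto intro!: hom2I)

lemma Vb_hom: "Vb \<in> hom1 K E E'"
  by (auto intro: hom1I)

lemma t'_pi_iota: "(\<one> t' \<odot> \<pi>) \<cdot> (\<one> t' \<odot> \<iota>) = \<one> (t' \<bullet> v' \<bullet> Vb)"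
  using whisker_cong[OF pi_iota, of t' "id1 K E"] by simp

lemma psi'_unit: "(\<psi>' \<odot> \<one> Vb) \<cdot> (\<eta>' \<odot> \<one> (v' \<bullet> Vb)) = \<one> (v' \<bullet> Vb)"
  using whisker_cong[OF B.psi_unit, of "id1 K k'" Vb] by simp

lemma lifted_action_cell[simp]: "\<alpha> \<in> cell K" "src2 K \<alpha> = t' \<bullet> V \<bullet> v" "tgt2 K \<alpha> = V \<bullet> v"
  unfolding lifted_action_def by auto

lemma induced_law_cell[simp]: "\<psi>V \<in> cell K" "src2 K \<psi>V = t' \<bullet> V" "tgt2 K \<psi>V = V \<bullet> t"
  unfolding induced_law_def by auto

lemma lifted_action_assoc: "\<alpha> \<cdot> (\<one> t' \<odot> \<alpha>) = \<alpha> \<cdot> (\<mu>' \<odot> \<one> (V \<bullet> v))"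
proof -
  have e2: "(\<psi>' \<odot> \<one> Vb) \<cdot> (\<one> t' \<odot> (\<psi>' \<odot> \<one> Vb)) = (\<psi>' \<odot> \<one> Vb) \<cdot> (\<mu>' \<odot> \<one> (v' \<bullet> Vb))"
    using whisker_cong[OF B.psi_assoc, of "id1 K k'" Vb] by simp
  have e3: "(\<mu>' \<odot> \<one> (v' \<bullet> Vb)) \<cdot> (\<one> t' \<odot> (\<one> t' \<odot> \<pi>)) = (\<one> t' \<odot> \<pi>) \<cdot> (\<mu>' \<odot> \<one> (V \<bullet> v))"
    using whisker_exchange[of \<mu>' \<pi>] by simp
  show ?thesis unfolding lifted_action_def
    by (simp add: t'_pi_iota vcomp_reassoc[OF t'_pi_iota] e2 vcomp_reassoc[OF e2] e3 vcomp_reassoc[OF e3])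
qed

lemma pi_lifted_action: "\<pi> \<cdot> \<alpha> = (\<psi>' \<odot> \<one> Vb) \<cdot> (\<one> t' \<odot> \<pi>)"
  unfolding lifted_action_def using pi_iota vcomp_reassoc[OF pi_iota] by simp

lemma lifted_action_unit: "\<alpha> \<cdot> (\<eta>' \<odot> \<one> (V \<bullet> v)) = \<iota> \<cdot> \<pi>"
proof -
  have e1: "(\<one> t' \<odot> \<pi>) \<cdot> (\<eta>' \<odot> \<one> (V \<bullet> v)) = (\<eta>' \<odot> \<one> (v' \<bullet> Vb)) \<cdot> \<pi>"
    using whisker_exchange[of \<eta>' \<pi>] by simp
  show ?thesis unfolding lifted_action_def
    by (simp add: e1 vcomp_reassoc[OF e1] psi'_unit vcomp_reassoc[OF psi'_unit])
qed

lemma induced_law_mult: "(\<one> V \<odot> \<mu>) \<cdot> (\<psi>V \<odot> \<one> t) = \<alpha> \<odot> \<one> A.f"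
proof -
  have e1: "(\<one> V \<odot> \<mu>) \<cdot> (\<alpha> \<odot> \<one> (A.f \<bullet> t)) = (\<alpha> \<odot> \<one> A.f) \<cdot> (\<one> t' \<odot> (\<one> V \<odot> \<mu>))"
    using whisker_exchange[of \<alpha> "A.eps \<odot> \<one> A.f"] by simp
  have e2: "(\<one> t' \<odot> (\<one> V \<odot> \<mu>)) \<cdot> (\<one> t' \<odot> (\<one> V \<odot> (\<eta> \<odot> \<one> t))) = \<one> (t' \<bullet> V \<bullet> t)"
    using whisker_cong[OF A.mu_wr_eta, of "t' \<bullet> V" "id1 K k"] by simp
  show ?thesis unfolding induced_law_def
    by (simp add: e1 vcomp_reassoc[OF e1] e2 vcomp_reassoc[OF e2])
qed

lemma induced_law_unit: "\<psi>V \<cdot> (\<eta>' \<odot> \<one> V) = (\<iota> \<odot> \<one> A.f) \<cdot> (\<pi> \<odot> \<one> A.f) \<cdot> (\<one> V \<odot> \<eta>)"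
proof -
  have e1: "(\<one> t' \<odot> (\<one> V \<odot> \<eta>)) \<cdot> (\<eta>' \<odot> \<one> V) = (\<eta>' \<odot> \<one> (V \<bullet> t)) \<cdot> (\<one> V \<odot> \<eta>)"
    using whisker_exchange[of \<eta>' "\<one> V \<odot> \<eta>"] by simp
  have e2: "(\<alpha> \<odot> \<one> A.f) \<cdot> (\<eta>' \<odot> \<one> (V \<bullet> t)) = (\<iota> \<odot> \<one> A.f) \<cdot> (\<pi> \<odot> \<one> A.f)"
    using whisker_cong[OF lifted_action_unit, of "id1 K k'" A.f] by simp
  show ?thesis unfolding induced_law_def
    by (simp add: e1 vcomp_reassoc[OF e1] e2 vcomp_reassoc[OF e2])
qed

lemma induced_law_mnd_obj: "(V, \<psi>V) \<in> mnd_obj K k t \<mu> k' t' \<mu>'"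
proof -
  have e1: "(\<alpha> \<odot> \<one> A.f) \<cdot> (\<one> t' \<odot> (\<alpha> \<odot> \<one> A.f)) = (\<alpha> \<odot> \<one> A.f) \<cdot> (\<mu>' \<odot> \<one> (V \<bullet> t))"
    using whisker_cong[OF lifted_action_assoc, of "id1 K k'" A.f] by simp
  have e2: "(\<mu>' \<odot> \<one> (V \<bullet> t)) \<cdot> (\<one> t' \<odot> (\<one> t' \<odot> (\<one> V \<odot> \<eta>))) = (\<one> t' \<odot> (\<one> V \<odot> \<eta>)) \<cdot> (\<mu>' \<odot> \<one> V)"
    using whisker_exchange[of \<mu>' "\<one> V \<odot> \<eta>"] by simp
  have "(\<one> V \<odot> \<mu>) \<cdot> (\<psi>V \<odot> \<one> t) \<cdot> (\<one> t' \<odot> \<psi>V) = (\<alpha> \<odot> \<one> A.f) \<cdot> (\<one> t' \<odot> \<psi>V)"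
    by (subst vcomp_assoc[symmetric]) (auto simp: induced_law_mult)
  also have "\<dots> = \<psi>V \<cdot> (\<mu>' \<odot> \<one> V)"
    unfolding induced_law_def by (simp add: e1 vcomp_reassoc[OF e1] e2 vcomp_reassoc[OF e2])
  finally show ?thesis
    unfolding mnd_obj_def wl_wr_hcomp by (auto intro!: hom1I hom2I)
qed

end

context EM_pair
begin

lemma distributive_action_assoc:
  assumes V: "V \<in> hom1 K k k'" and \<phi>: "(V, \<phi>) \<in> mnd_obj K k t \<mu> k' t' \<mu>'"
  defines "\<alpha> \<equiv> (\<one> V \<odot> \<psi>) \<cdot> (\<phi> \<odot> \<one> v)"
  shows "\<alpha> \<cdot> (\<one> t' \<odot> \<alpha>) = \<alpha> \<cdot> (\<mu>' \<odot> \<one> (V \<bullet> v))"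
proof -
  have hv[simp]: "V \<in> arr K" "src1 K V = k" "tgt1 K V = k'" using hom1D[OF V] by auto
  have hp[simp]: "\<phi> \<in> cell K" "src2 K \<phi> = t' \<bullet> V" "tgt2 K \<phi> = V \<bullet> t"
    and law: "(\<one> V \<odot> \<mu>) \<cdot> (\<phi> \<odot> \<one> t) \<cdot> (\<one> t' \<odot> \<phi>) = \<phi> \<cdot> (\<mu>' \<odot> \<one> V)"
    using \<phi> unfolding mnd_obj_def wl_wr_hcomp hom2_def by auto
  have x1: "(\<phi> \<odot> \<one> v) \<cdot> (\<one> t' \<odot> (\<one> V \<odot> \<psi>)) = (\<one> V \<odot> (\<one> t \<odot> \<psi>)) \<cdot> (\<phi> \<odot> \<one> (t \<bullet> v))"
    using whisker_exchange[of \<phi> \<psi>] by simp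
  have x2: "(\<one> V \<odot> \<psi>) \<cdot> (\<one> V \<odot> (\<one> t \<odot> \<psi>)) = (\<one> V \<odot> \<psi>) \<cdot> (\<one> V \<odot> (\<mu> \<odot> \<one> v))"
    using whisker_cong[OF A.psi_assoc, of V "id1 K E"] by simp
  have x3: "(\<one> V \<odot> (\<mu> \<odot> \<one> v)) \<cdot> (\<phi> \<odot> \<one> (t \<bullet> v)) \<cdot> (\<one> t' \<odot> (\<phi> \<odot> \<one> v)) = (\<phi> \<odot> \<one> v) \<cdot> (\<mu>' \<odot> \<one> (V \<bullet> v))"
    using whisker_cong[OF law, of "id1 K k'" v] by simp
  show ?thesis unfolding \<alpha>_def
    by (simp add: x1 vcomp_reassoc[OF x1] x2 vcomp_reassoc[OF x2] x3 vcomp_reassoc3[OF x3])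
qed

lemma distributive_action_transpose:
  assumes V: "V \<in> hom1 K k k'" and \<phi>: "\<phi> \<in> hom2 K (t' \<bullet> V) (V \<bullet> t)"
  shows "(((\<one> V \<odot> \<psi>) \<cdot> (\<phi> \<odot> \<one> v)) \<odot> \<one> A.f) \<cdot> (\<one> t' \<odot> (\<one> V \<odot> \<eta>)) = \<phi>"
proof -
  have hv[simp]: "V \<in> arr K" "src1 K V = k" "tgt1 K V = k'" using hom1D[OF V] by auto
  have hp[simp]: "\<phi> \<in> cell K" "src2 K \<phi> = t' \<bullet> V" "tgt2 K \<phi> = V \<bullet> t" using hom2D[OF \<phi>] by auto
  have x5: "(\<phi> \<odot> \<one> t) \<cdot> (\<one> t' \<odot> (\<one> V \<odot> \<eta>)) = (\<one> V \<odot> (\<one> t \<odot> \<eta>)) \<cdot> \<phi>"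
    using whisker_exchange[of \<phi> \<eta>] by simp
  have x6: "(\<one> V \<odot> \<mu>) \<cdot> (\<one> V \<odot> (\<one> t \<odot> \<eta>)) = \<one> (V \<bullet> t)"
    using whisker_cong[OF A.mu_wl_eta, of V "id1 K k"] by simp
  show ?thesis by (simp add: x5 vcomp_reassoc[OF x5] x6 vcomp_reassoc[OF x6])
qed

lemma mnd_obj_has_weak_lifting:
  assumes split: "idempotents_split K" and \<phi>: "(V, \<phi>) \<in> mnd_obj K k t \<mu> k' t' \<mu>'"
  shows "\<exists>Vb \<iota> \<pi>. (V, Vb, \<iota>, \<pi>) \<in> lift_obj K k E v k' E' v' \<and> induced_law V Vb \<iota> \<pi> = \<phi>"
proof -
  have V: "V \<in> hom1 K k k'" and \<phi>_hom: "\<phi> \<in> hom2 K (t' \<bullet> V) (V \<bullet> t)"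
    using \<phi> unfolding mnd_obj_def by auto
  have hv[simp]: "V \<in> arr K" "src1 K V = k" "tgt1 K V = k'" using hom1D[OF V] by auto
  define \<alpha> where "\<alpha> = (\<one> V \<odot> \<psi>) \<cdot> (\<phi> \<odot> \<one> v)"
  have \<alpha>_hom: "\<alpha> \<in> hom2 K (t' \<bullet> V \<bullet> v) (V \<bullet> v)"
    unfolding \<alpha>_def using hom2D[OF \<phi>_hom] by (auto intro: hom2I)
  have \<alpha>_assoc: "\<alpha> \<cdot> (\<one> t' \<odot> \<alpha>) = \<alpha> \<cdot> (\<mu>' \<odot> \<one> (V \<bullet> v))"
    unfolding \<alpha>_def by (rule distributive_action_assoc[OF V \<phi>])
  define e where "e = \<alpha> \<cdot> (\<eta>' \<odot> \<one> (V \<bullet> v))"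
  have "e \<in> cell K" "src2 K e = V \<bullet> v" "tgt2 K e = V \<bullet> v" "e \<cdot> e = e"
    unfolding e_def using hom2D[OF \<alpha>_hom]
      B.action_eta_idem[OF _ _ \<alpha>_hom \<alpha>_assoc] vcomp_reassoc3[of \<alpha> "\<eta>' \<odot> \<one> (V \<bullet> v)" \<alpha> \<alpha>] by auto
  then obtain X \<iota> \<pi> where \<iota>: "\<iota> \<in> hom2 K X (V \<bullet> v)" and \<pi>: "\<pi> \<in> hom2 K (V \<bullet> v) X"
    and e: "\<iota> \<cdot> \<pi> = e" and retract: "\<pi> \<cdot> \<iota> = \<one> X"
    using split unfolding idempotents_split_def by metis
  note alg = B.split_action_alg[OF _ _ \<alpha>_hom \<alpha>_assoc \<iota> \<pi> e[unfolded e_def] retract]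
    B.split_action_recovers[OF _ _ \<alpha>_hom \<alpha>_assoc \<iota> \<pi> e[unfolded e_def] retract]
  obtain Vb where Vb: "Vb \<in> hom1 K E E'" and X: "v' \<bullet> Vb = X"
    and \<psi>Vb: "\<psi>' \<odot> \<one> Vb = \<pi> \<cdot> \<alpha> \<cdot> (\<one> t' \<odot> \<iota>)"
    using ex1_implies_ex[OF B.EM_univ_arr[OF A.E_obj alg(1)[simplified]]] by blast
  have "(V, Vb, \<iota>, \<pi>) \<in> lift_obj K k E v k' E' v'"
    unfolding lift_obj_def using V Vb \<iota> \<pi> retract X by auto
  moreover have "induced_law V Vb \<iota> \<pi> = \<phi>"
    unfolding induced_law_def lifted_action_def using \<psi>Vb X alg(2)
      distributive_action_transpose[OF V \<phi>_hom] unfolding \<alpha>_def by simp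
  ultimately show ?thesis by blast
qed

end

section \<open>Full faithfulness\<close>

locale weak_lifting_pair = EM_pair +
  fixes V Vb \<iota>1 \<pi>1 W Wb \<iota>2 \<pi>2
  assumes lift1: "(V, Vb, \<iota>1, \<pi>1) \<in> lift_obj K k E v k' E' v'"
    and lift2: "(W, Wb, \<iota>2, \<pi>2) \<in> lift_obj K k E v k' E' v'"

sublocale weak_lifting_pair \<subseteq> P: weak_lifting K k t \<mu> \<eta> E v \<psi> k' t' \<mu>' \<eta>' E' v' \<psi>' V Vb \<iota>1 \<pi>1
  by unfold_locales (rule lift1)
sublocale weak_lifting_pair \<subseteq> Q: weak_lifting K k t \<mu> \<eta> E v \<psi> k' t' \<mu>' \<eta>' E' v' \<psi>' W Wb \<iota>2 \<pi>2
  by unfold_locales (rule lift2)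

context weak_lifting_pair
begin

lemma transpose_eq_iff:
  assumes "\<beta>1 \<in> hom2 K (t' \<bullet> V \<bullet> v) (W \<bullet> v)" "\<beta>2 \<in> hom2 K (t' \<bullet> V \<bullet> v) (W \<bullet> v)"
  shows "(\<beta>1 \<odot> \<one> A.f) \<cdot> (\<one> t' \<odot> (\<one> V \<odot> \<eta>)) = (\<beta>2 \<odot> \<one> A.f) \<cdot> (\<one> t' \<odot> (\<one> V \<odot> \<eta>))
    \<longleftrightarrow> \<beta>1 = \<beta>2"
proof
  assume eq: "(\<beta>1 \<odot> \<one> A.f) \<cdot> (\<one> t' \<odot> (\<one> V \<odot> \<eta>)) = (\<beta>2 \<odot> \<one> A.f) \<cdot> (\<one> t' \<odot> (\<one> V \<odot> \<eta>))"
  show "\<beta>1 = \<beta>2"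
    by (rule A.transpose_inj[of "t' \<bullet> V" \<beta>1 "W \<bullet> v" \<beta>2]) (use assms eq in simp_all)
qed simp

lemma MndI_hom_iff:
  "\<omega> \<in> chom (MndI K k t \<mu> \<eta> k' t' \<mu>' \<eta>') (V, P.\<psi>V) (W, Q.\<psi>V) \<longleftrightarrow>
    \<omega> \<in> hom2 K V W \<and> (\<omega> \<odot> \<one> v) \<cdot> P.\<alpha> = Q.\<alpha> \<cdot> (\<one> t' \<odot> ((\<omega> \<odot> \<one> v) \<cdot> \<iota>1 \<cdot> \<pi>1))"
proof (cases "\<omega> \<in> hom2 K V W")
  case True
  note h = hom2D[OF True]
  have lhs: "(\<omega> \<odot> \<one> t) \<cdot> P.\<psi>V = (((\<omega> \<odot> \<one> v) \<cdot> P.\<alpha>) \<odot> \<one> A.f) \<cdot> (\<one> t' \<odot> (\<one> V \<odot> \<eta>))"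
    unfolding induced_law_def using h by simp
  have unit: "(\<one> t' \<odot> P.\<psi>V) \<cdot> (\<one> t' \<odot> (\<eta>' \<odot> \<one> V)) =
      (\<one> t' \<odot> (\<iota>1 \<odot> \<one> A.f)) \<cdot> (\<one> t' \<odot> (\<pi>1 \<odot> \<one> A.f)) \<cdot> (\<one> t' \<odot> (\<one> V \<odot> \<eta>))"
    using whisker_cong[OF P.induced_law_unit, of t' "id1 K k"] by simp
  have rhs: "(\<one> W \<odot> \<mu>) \<cdot> (Q.\<psi>V \<odot> \<one> t) \<cdot> (\<one> t' \<odot> (\<omega> \<odot> \<one> t)) \<cdot> (\<one> t' \<odot> P.\<psi>V) \<cdot> (\<one> t' \<odot> (\<eta>' \<odot> \<one> V))
      = ((Q.\<alpha> \<cdot> (\<one> t' \<odot> ((\<omega> \<odot> \<one> v) \<cdot> \<iota>1 \<cdot> \<pi>1))) \<odot> \<one> A.f) \<cdot> (\<one> t' \<odot> (\<one> V \<odot> \<eta>))"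
    using h Q.induced_law_mult vcomp_reassoc[OF Q.induced_law_mult]
    by (simp add: unit vcomp_reassoc[OF unit])
  have "\<omega> \<in> chom (MndI K k t \<mu> \<eta> k' t' \<mu>' \<eta>') (V, P.\<psi>V) (W, Q.\<psi>V) \<longleftrightarrow>
      (\<omega> \<odot> \<one> t) \<cdot> P.\<psi>V =
      (\<one> W \<odot> \<mu>) \<cdot> (Q.\<psi>V \<odot> \<one> t) \<cdot> (\<one> t' \<odot> (\<omega> \<odot> \<one> t)) \<cdot> (\<one> t' \<odot> P.\<psi>V) \<cdot> (\<one> t' \<odot> (\<eta>' \<odot> \<one> V))"
    using True by (simp add: MndI_def wl_wr_hcomp)
  also have "\<dots> \<longleftrightarrow> (\<omega> \<odot> \<one> v) \<cdot> P.\<alpha> = Q.\<alpha> \<cdot> (\<one> t' \<odot> ((\<omega> \<odot> \<one> v) \<cdot> \<iota>1 \<cdot> \<pi>1))"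
    unfolding lhs rhs by (intro transpose_eq_iff hom2I) (use h in simp_all)
  finally show ?thesis using True by blast
qed (simp add: MndI_def)

lemma MndP_hom_iff:
  "\<omega> \<in> chom (MndP K k t \<mu> \<eta> k' t' \<mu>' \<eta>') (V, P.\<psi>V) (W, Q.\<psi>V) \<longleftrightarrow>
    \<omega> \<in> hom2 K V W \<and> Q.\<alpha> \<cdot> (\<one> t' \<odot> (\<omega> \<odot> \<one> v)) = Q.\<alpha> \<cdot> (\<eta>' \<odot> \<one> (W \<bullet> v)) \<cdot> (\<omega> \<odot> \<one> v) \<cdot> P.\<alpha>"
proof (cases "\<omega> \<in> hom2 K V W")
  case True
  note h = hom2D[OF True]
  have nat: "(\<one> t' \<odot> (\<one> W \<odot> \<eta>)) \<cdot> (\<one> t' \<odot> \<omega>) = (\<one> t' \<odot> (\<omega> \<odot> \<one> t)) \<cdot> (\<one> t' \<odot> (\<one> V \<odot> \<eta>))"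
    using whisker_exchange[of "\<one> t' \<odot> \<omega>" \<eta>] h by simp
  have lhs: "Q.\<psi>V \<cdot> (\<one> t' \<odot> \<omega>) = ((Q.\<alpha> \<cdot> (\<one> t' \<odot> (\<omega> \<odot> \<one> v))) \<odot> \<one> A.f) \<cdot> (\<one> t' \<odot> (\<one> V \<odot> \<eta>))"
    unfolding induced_law_def using h by (simp add: nat vcomp_reassoc[OF nat])
  have rhs: "(\<one> W \<odot> \<mu>) \<cdot> (Q.\<psi>V \<odot> \<one> t) \<cdot> (\<eta>' \<odot> \<one> (W \<bullet> t)) \<cdot> (\<omega> \<odot> \<one> t) \<cdot> P.\<psi>V
      = ((Q.\<alpha> \<cdot> (\<eta>' \<odot> \<one> (W \<bullet> v)) \<cdot> (\<omega> \<odot> \<one> v) \<cdot> P.\<alpha>) \<odot> \<one> A.f) \<cdot> (\<one> t' \<odot> (\<one> V \<odot> \<eta>))"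
    unfolding induced_law_def[of V] using h
    by (simp add: Q.induced_law_mult vcomp_reassoc[OF Q.induced_law_mult])
  have e: "(\<eta>' \<odot> \<one> W) \<odot> \<one> t = \<eta>' \<odot> \<one> (W \<bullet> t)" using h by simp
  have "\<omega> \<in> chom (MndP K k t \<mu> \<eta> k' t' \<mu>' \<eta>') (V, P.\<psi>V) (W, Q.\<psi>V) \<longleftrightarrow>
      Q.\<psi>V \<cdot> (\<one> t' \<odot> \<omega>) = (\<one> W \<odot> \<mu>) \<cdot> (Q.\<psi>V \<odot> \<one> t) \<cdot> (\<eta>' \<odot> \<one> (W \<bullet> t)) \<cdot> (\<omega> \<odot> \<one> t) \<cdot> P.\<psi>V"
    using True by (simp add: MndP_def wl_wr_hcomp e)
  also have "\<dots> \<longleftrightarrow> Q.\<alpha> \<cdot> (\<one> t' \<odot> (\<omega> \<odot> \<one> v)) = Q.\<alpha> \<cdot> (\<eta>' \<odot> \<one> (W \<bullet> v)) \<cdot> (\<omega> \<odot> \<one> v) \<cdot> P.\<alpha>"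
    unfolding lhs rhs by (intro transpose_eq_iff hom2I) (use h in simp_all)
  finally show ?thesis using True by blast
qed (simp add: MndP_def)

lemma LiftI_hom_iff:
  "(\<omega>, \<omega>b) \<in> chom (LiftI K k E v k' E' v') (V, Vb, \<iota>1, \<pi>1) (W, Wb, \<iota>2, \<pi>2) \<longleftrightarrow>
    \<omega> \<in> hom2 K V W \<and> \<omega>b \<in> hom2 K Vb Wb \<and> \<iota>2 \<cdot> (\<one> v' \<odot> \<omega>b) = (\<omega> \<odot> \<one> v) \<cdot> \<iota>1"
  unfolding LiftI_def wl_wr_hcomp by simp

lemma LiftP_hom_iff:
  "(\<omega>, \<omega>b) \<in> chom (LiftP K k E v k' E' v') (V, Vb, \<iota>1, \<pi>1) (W, Wb, \<iota>2, \<pi>2) \<longleftrightarrow>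
    \<omega> \<in> hom2 K V W \<and> \<omega>b \<in> hom2 K Vb Wb \<and> (\<one> v' \<odot> \<omega>b) \<cdot> \<pi>1 = \<pi>2 \<cdot> (\<omega> \<odot> \<one> v)"
  unfolding LiftP_def wl_wr_hcomp by simp

lemma lifted_action_natural_iota:
  assumes \<omega>: "\<omega> \<in> hom2 K V W" and \<omega>b: "\<omega>b \<in> hom2 K Vb Wb"
    and c: "\<iota>2 \<cdot> (\<one> v' \<odot> \<omega>b) = (\<omega> \<odot> \<one> v) \<cdot> \<iota>1"
  shows "(\<omega> \<odot> \<one> v) \<cdot> P.\<alpha> = Q.\<alpha> \<cdot> (\<one> t' \<odot> ((\<omega> \<odot> \<one> v) \<cdot> \<iota>1 \<cdot> \<pi>1))"
proof -
  note hh = hom2D[OF \<omega>] hom2D[OF \<omega>b]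
  have c1: "(\<one> t' \<odot> (\<omega> \<odot> \<one> v)) \<cdot> (\<one> t' \<odot> \<iota>1) = (\<one> t' \<odot> \<iota>2) \<cdot> (\<one> t' \<odot> (\<one> v' \<odot> \<omega>b))"
    using whisker_cong[OF c[symmetric], of t' "id1 K E"] hh by simp
  have c3: "(\<psi>' \<odot> \<one> Wb) \<cdot> (\<one> t' \<odot> (\<one> v' \<odot> \<omega>b)) = (\<one> v' \<odot> \<omega>b) \<cdot> (\<psi>' \<odot> \<one> Vb)"
    using B.psi_whisker_natural[OF \<omega>b, of E] by (simp add: hom1I)
  show ?thesis unfolding lifted_action_def using hh
    by (simp add: c c1 vcomp_reassoc[OF c1] Q.t'_pi_iota vcomp_reassoc[OF Q.t'_pi_iota]
        c3 vcomp_reassoc[OF c3] vcomp_reassoc[OF c])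
qed

lemma lifted_action_natural_pi:
  assumes \<omega>: "\<omega> \<in> hom2 K V W" and \<omega>b: "\<omega>b \<in> hom2 K Vb Wb"
    and c: "(\<one> v' \<odot> \<omega>b) \<cdot> \<pi>1 = \<pi>2 \<cdot> (\<omega> \<odot> \<one> v)"
  shows "Q.\<alpha> \<cdot> (\<one> t' \<odot> (\<omega> \<odot> \<one> v)) = Q.\<alpha> \<cdot> (\<eta>' \<odot> \<one> (W \<bullet> v)) \<cdot> (\<omega> \<odot> \<one> v) \<cdot> P.\<alpha>"
proof -
  note hh = hom2D[OF \<omega>] hom2D[OF \<omega>b]
  have c1: "(\<one> t' \<odot> \<pi>2) \<cdot> (\<one> t' \<odot> (\<omega> \<odot> \<one> v)) = (\<one> t' \<odot> (\<one> v' \<odot> \<omega>b)) \<cdot> (\<one> t' \<odot> \<pi>1)"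
    using whisker_cong[OF c[symmetric], of t' "id1 K E"] hh by simp
  have c3: "(\<psi>' \<odot> \<one> Wb) \<cdot> (\<one> t' \<odot> (\<one> v' \<odot> \<omega>b)) = (\<one> v' \<odot> \<omega>b) \<cdot> (\<psi>' \<odot> \<one> Vb)"
    using B.psi_whisker_natural[OF \<omega>b, of E] by (simp add: hom1I)
  have "Q.\<alpha> \<cdot> (\<one> t' \<odot> (\<omega> \<odot> \<one> v)) = \<iota>2 \<cdot> (\<one> v' \<odot> \<omega>b) \<cdot> (\<psi>' \<odot> \<one> Vb) \<cdot> (\<one> t' \<odot> \<pi>1)"
    unfolding lifted_action_def[of W] using hh by (simp add: c1 vcomp_reassoc[OF c1] c3 vcomp_reassoc[OF c3])
  also have "\<dots> = Q.\<alpha> \<cdot> (\<eta>' \<odot> \<one> (W \<bullet> v)) \<cdot> (\<omega> \<odot> \<one> v) \<cdot> P.\<alpha>"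
    using hh by (simp add: Q.lifted_action_unit vcomp_reassoc[OF Q.lifted_action_unit]
        c[symmetric] vcomp_reassoc[OF c[symmetric]] P.pi_lifted_action vcomp_reassoc[OF P.pi_lifted_action])
  finally show ?thesis .
qed

text \<open>Fullness: the candidate lifting of \<open>\<omega>\<close> is \<open>\<rho> = \<pi>2 \<cdot> \<omega>v \<cdot> \<iota>1\<close>, which commutes with the
  \<open>t'\<close>-actions and hence comes from a unique 2-cell \<open>Vb \<Rightarrow> Wb\<close>.\<close>

lemma LiftI_full:
  assumes \<omega>: "\<omega> \<in> hom2 K V W"
    and c: "(\<omega> \<odot> \<one> v) \<cdot> P.\<alpha> = Q.\<alpha> \<cdot> (\<one> t' \<odot> ((\<omega> \<odot> \<one> v) \<cdot> \<iota>1 \<cdot> \<pi>1))"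
  shows "\<exists>\<omega>b. \<omega>b \<in> hom2 K Vb Wb \<and> \<iota>2 \<cdot> (\<one> v' \<odot> \<omega>b) = (\<omega> \<odot> \<one> v) \<cdot> \<iota>1"
proof -
  note hh = hom2D[OF \<omega>]
  define \<rho> where "\<rho> = \<pi>2 \<cdot> (\<omega> \<odot> \<one> v) \<cdot> \<iota>1"
  from c have "((\<omega> \<odot> \<one> v) \<cdot> P.\<alpha>) \<cdot> (\<one> t' \<odot> \<iota>1) = (Q.\<alpha> \<cdot> (\<one> t' \<odot> ((\<omega> \<odot> \<one> v) \<cdot> \<iota>1 \<cdot> \<pi>1))) \<cdot> (\<one> t' \<odot> \<iota>1)"
    by simp
  then have s2: "(\<omega> \<odot> \<one> v) \<cdot> \<iota>1 \<cdot> (\<psi>' \<odot> \<one> Vb) =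
      \<iota>2 \<cdot> (\<psi>' \<odot> \<one> Wb) \<cdot> (\<one> t' \<odot> \<pi>2) \<cdot> (\<one> t' \<odot> (\<omega> \<odot> \<one> v)) \<cdot> (\<one> t' \<odot> \<iota>1)"
    unfolding lifted_action_def using hh by (simp add: P.t'_pi_iota vcomp_reassoc[OF P.t'_pi_iota])
  then have "\<pi>2 \<cdot> ((\<omega> \<odot> \<one> v) \<cdot> \<iota>1 \<cdot> (\<psi>' \<odot> \<one> Vb)) =
      \<pi>2 \<cdot> (\<iota>2 \<cdot> (\<psi>' \<odot> \<one> Wb) \<cdot> (\<one> t' \<odot> \<pi>2) \<cdot> (\<one> t' \<odot> (\<omega> \<odot> \<one> v)) \<cdot> (\<one> t' \<odot> \<iota>1))"
    by simp
  then have natural: "(\<psi>' \<odot> \<one> Wb) \<cdot> (\<one> t' \<odot> \<rho>) = \<rho> \<cdot> (\<psi>' \<odot> \<one> Vb)"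
    unfolding \<rho>_def using hh by (simp add: Q.pi_iota vcomp_reassoc[OF Q.pi_iota])
  have x1: "(\<one> t' \<odot> \<iota>1) \<cdot> (\<eta>' \<odot> \<one> (v' \<bullet> Vb)) = (\<eta>' \<odot> \<one> (V \<bullet> v)) \<cdot> \<iota>1"
    and x2: "(\<one> t' \<odot> (\<omega> \<odot> \<one> v)) \<cdot> (\<eta>' \<odot> \<one> (V \<bullet> v)) = (\<eta>' \<odot> \<one> (W \<bullet> v)) \<cdot> (\<omega> \<odot> \<one> v)"
    and x3: "(\<one> t' \<odot> \<pi>2) \<cdot> (\<eta>' \<odot> \<one> (W \<bullet> v)) = (\<eta>' \<odot> \<one> (v' \<bullet> Wb)) \<cdot> \<pi>2"
    using B.eta_natural[of \<iota>1] B.eta_natural[of "\<omega> \<odot> \<one> v"] B.eta_natural[of \<pi>2] hh by simp_all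
  from s2 have "((\<omega> \<odot> \<one> v) \<cdot> \<iota>1 \<cdot> (\<psi>' \<odot> \<one> Vb)) \<cdot> (\<eta>' \<odot> \<one> (v' \<bullet> Vb)) =
      (\<iota>2 \<cdot> (\<psi>' \<odot> \<one> Wb) \<cdot> (\<one> t' \<odot> \<pi>2) \<cdot> (\<one> t' \<odot> (\<omega> \<odot> \<one> v)) \<cdot> (\<one> t' \<odot> \<iota>1)) \<cdot> (\<eta>' \<odot> \<one> (v' \<bullet> Vb))"
    by simp
  then have commute: "(\<omega> \<odot> \<one> v) \<cdot> \<iota>1 = \<iota>2 \<cdot> \<rho>"
    unfolding \<rho>_def using hh
    by (simp add: x1 vcomp_reassoc[OF x1] x2 vcomp_reassoc[OF x2] x3 vcomp_reassoc[OF x3]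
        P.psi'_unit vcomp_reassoc[OF P.psi'_unit] Q.psi'_unit vcomp_reassoc[OF Q.psi'_unit])
  have "\<rho> \<in> hom2 K (v' \<bullet> Vb) (v' \<bullet> Wb)" unfolding \<rho>_def using hh by (intro hom2I) auto
  with B.v_full[OF P.Vb_hom Q.Vb_hom _ natural] obtain \<omega>b
    where "\<omega>b \<in> hom2 K Vb Wb" "\<one> v' \<odot> \<omega>b = \<rho>"
    by blast
  then show ?thesis using commute by auto
qed

lemma LiftP_full:
  assumes \<omega>: "\<omega> \<in> hom2 K V W"
    and c: "Q.\<alpha> \<cdot> (\<one> t' \<odot> (\<omega> \<odot> \<one> v)) = Q.\<alpha> \<cdot> (\<eta>' \<odot> \<one> (W \<bullet> v)) \<cdot> (\<omega> \<odot> \<one> v) \<cdot> P.\<alpha>"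
  shows "\<exists>\<omega>b. \<omega>b \<in> hom2 K Vb Wb \<and> (\<one> v' \<odot> \<omega>b) \<cdot> \<pi>1 = \<pi>2 \<cdot> (\<omega> \<odot> \<one> v)"
proof -
  note hh = hom2D[OF \<omega>]
  define \<rho> where "\<rho> = \<pi>2 \<cdot> (\<omega> \<odot> \<one> v) \<cdot> \<iota>1"
  from c have "\<pi>2 \<cdot> (Q.\<alpha> \<cdot> (\<one> t' \<odot> (\<omega> \<odot> \<one> v))) = \<pi>2 \<cdot> (Q.\<alpha> \<cdot> (\<eta>' \<odot> \<one> (W \<bullet> v)) \<cdot> (\<omega> \<odot> \<one> v) \<cdot> P.\<alpha>)"
    by simp
  then have s2: "(\<psi>' \<odot> \<one> Wb) \<cdot> (\<one> t' \<odot> \<pi>2) \<cdot> (\<one> t' \<odot> (\<omega> \<odot> \<one> v)) =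
      \<pi>2 \<cdot> (\<omega> \<odot> \<one> v) \<cdot> \<iota>1 \<cdot> (\<psi>' \<odot> \<one> Vb) \<cdot> (\<one> t' \<odot> \<pi>1)"
    using hh by (simp add: Q.pi_lifted_action vcomp_reassoc[OF Q.pi_lifted_action] Q.lifted_action_unit
        vcomp_reassoc[OF Q.lifted_action_unit] Q.pi_iota vcomp_reassoc[OF Q.pi_iota] lifted_action_def[of V])
  from s2 have "((\<psi>' \<odot> \<one> Wb) \<cdot> (\<one> t' \<odot> \<pi>2) \<cdot> (\<one> t' \<odot> (\<omega> \<odot> \<one> v))) \<cdot> (\<one> t' \<odot> \<iota>1) =
      (\<pi>2 \<cdot> (\<omega> \<odot> \<one> v) \<cdot> \<iota>1 \<cdot> (\<psi>' \<odot> \<one> Vb) \<cdot> (\<one> t' \<odot> \<pi>1)) \<cdot> (\<one> t' \<odot> \<iota>1)"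
    by simp
  then have natural: "(\<psi>' \<odot> \<one> Wb) \<cdot> (\<one> t' \<odot> \<rho>) = \<rho> \<cdot> (\<psi>' \<odot> \<one> Vb)"
    unfolding \<rho>_def using hh by (simp add: P.t'_pi_iota vcomp_reassoc[OF P.t'_pi_iota])
  have x1: "(\<one> t' \<odot> \<pi>1) \<cdot> (\<eta>' \<odot> \<one> (V \<bullet> v)) = (\<eta>' \<odot> \<one> (v' \<bullet> Vb)) \<cdot> \<pi>1"
    and x2: "(\<one> t' \<odot> (\<omega> \<odot> \<one> v)) \<cdot> (\<eta>' \<odot> \<one> (V \<bullet> v)) = (\<eta>' \<odot> \<one> (W \<bullet> v)) \<cdot> (\<omega> \<odot> \<one> v)"
    and x3: "(\<one> t' \<odot> \<pi>2) \<cdot> (\<eta>' \<odot> \<one> (W \<bullet> v)) = (\<eta>' \<odot> \<one> (v' \<bullet> Wb)) \<cdot> \<pi>2"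
    using B.eta_natural[of \<pi>1] B.eta_natural[of "\<omega> \<odot> \<one> v"] B.eta_natural[of \<pi>2] hh by simp_all
  from s2 have "((\<psi>' \<odot> \<one> Wb) \<cdot> (\<one> t' \<odot> \<pi>2) \<cdot> (\<one> t' \<odot> (\<omega> \<odot> \<one> v))) \<cdot> (\<eta>' \<odot> \<one> (V \<bullet> v)) =
      (\<pi>2 \<cdot> (\<omega> \<odot> \<one> v) \<cdot> \<iota>1 \<cdot> (\<psi>' \<odot> \<one> Vb) \<cdot> (\<one> t' \<odot> \<pi>1)) \<cdot> (\<eta>' \<odot> \<one> (V \<bullet> v))"
    by simp
  then have commute: "\<pi>2 \<cdot> (\<omega> \<odot> \<one> v) = \<rho> \<cdot> \<pi>1"
    unfolding \<rho>_def using hh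
    by (simp add: x1 vcomp_reassoc[OF x1] x2 vcomp_reassoc[OF x2] x3 vcomp_reassoc[OF x3]
        P.psi'_unit vcomp_reassoc[OF P.psi'_unit] Q.psi'_unit vcomp_reassoc[OF Q.psi'_unit])
  have "\<rho> \<in> hom2 K (v' \<bullet> Vb) (v' \<bullet> Wb)" unfolding \<rho>_def using hh by (intro hom2I) auto
  with B.v_full[OF P.Vb_hom Q.Vb_hom _ natural] obtain \<omega>b
    where "\<omega>b \<in> hom2 K Vb Wb" "\<one> v' \<odot> \<omega>b = \<rho>"
    by blast
  then show ?thesis using commute by auto
qed

lemma v'_whisker_inj:
  assumes "\<omega>b1 \<in> hom2 K Vb Wb" "\<omega>b2 \<in> hom2 K Vb Wb" "\<one> v' \<odot> \<omega>b1 = \<one> v' \<odot> \<omega>b2"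
  shows "\<omega>b1 = \<omega>b2"
  using B.v_faithful[OF assms(1,2) P.Vb_hom Q.Vb_hom assms(3)] .

lemma LiftI_faithful:
  assumes "(\<omega>, \<omega>b1) \<in> chom (LiftI K k E v k' E' v') (V, Vb, \<iota>1, \<pi>1) (W, Wb, \<iota>2, \<pi>2)"
    and "(\<omega>, \<omega>b2) \<in> chom (LiftI K k E v k' E' v') (V, Vb, \<iota>1, \<pi>1) (W, Wb, \<iota>2, \<pi>2)"
  shows "\<omega>b1 = \<omega>b2"
proof -
  from assms have h: "\<omega>b1 \<in> hom2 K Vb Wb" "\<omega>b2 \<in> hom2 K Vb Wb"
    and c: "\<iota>2 \<cdot> (\<one> v' \<odot> \<omega>b1) = \<iota>2 \<cdot> (\<one> v' \<odot> \<omega>b2)"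
    unfolding LiftI_hom_iff by auto
  note hh = hom2D[OF h(1)] hom2D[OF h(2)]
  have "\<one> v' \<odot> \<omega>b1 = \<pi>2 \<cdot> \<iota>2 \<cdot> (\<one> v' \<odot> \<omega>b1)" using hh by (simp add: Q.pi_iota vcomp_reassoc[OF Q.pi_iota])
  also have "\<dots> = \<pi>2 \<cdot> \<iota>2 \<cdot> (\<one> v' \<odot> \<omega>b2)" using c by simp
  also have "\<dots> = \<one> v' \<odot> \<omega>b2" using hh by (simp add: Q.pi_iota vcomp_reassoc[OF Q.pi_iota])
  finally show ?thesis by (rule v'_whisker_inj[OF h])
qed

lemma LiftP_faithful:
  assumes "(\<omega>, \<omega>b1) \<in> chom (LiftP K k E v k' E' v') (V, Vb, \<iota>1, \<pi>1) (W, Wb, \<iota>2, \<pi>2)"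
    and "(\<omega>, \<omega>b2) \<in> chom (LiftP K k E v k' E' v') (V, Vb, \<iota>1, \<pi>1) (W, Wb, \<iota>2, \<pi>2)"
  shows "\<omega>b1 = \<omega>b2"
proof -
  from assms have h: "\<omega>b1 \<in> hom2 K Vb Wb" "\<omega>b2 \<in> hom2 K Vb Wb"
    and c: "(\<one> v' \<odot> \<omega>b1) \<cdot> \<pi>1 = (\<one> v' \<odot> \<omega>b2) \<cdot> \<pi>1"
    unfolding LiftP_hom_iff by auto
  note hh = hom2D[OF h(1)] hom2D[OF h(2)]
  have "\<one> v' \<odot> \<omega>b1 = ((\<one> v' \<odot> \<omega>b1) \<cdot> \<pi>1) \<cdot> \<iota>1" using hh by (simp add: P.pi_iota)
  also have "\<dots> = ((\<one> v' \<odot> \<omega>b2) \<cdot> \<pi>1) \<cdot> \<iota>1" using c by simp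
  also have "\<dots> = \<one> v' \<odot> \<omega>b2" using hh by (simp add: P.pi_iota)
  finally show ?thesis by (rule v'_whisker_inj[OF h])
qed

lemma MndI_hom_iff_LiftI:
  "\<omega> \<in> chom (MndI K k t \<mu> \<eta> k' t' \<mu>' \<eta>') (V, P.\<psi>V) (W, Q.\<psi>V) \<longleftrightarrow>
    (\<exists>\<omega>b. (\<omega>, \<omega>b) \<in> chom (LiftI K k E v k' E' v') (V, Vb, \<iota>1, \<pi>1) (W, Wb, \<iota>2, \<pi>2))"
  unfolding MndI_hom_iff LiftI_hom_iff using LiftI_full lifted_action_natural_iota by blast

lemma MndP_hom_iff_LiftP:
  "\<omega> \<in> chom (MndP K k t \<mu> \<eta> k' t' \<mu>' \<eta>') (V, P.\<psi>V) (W, Q.\<psi>V) \<longleftrightarrow>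
    (\<exists>\<omega>b. (\<omega>, \<omega>b) \<in> chom (LiftP K k E v k' E' v') (V, Vb, \<iota>1, \<pi>1) (W, Wb, \<iota>2, \<pi>2))"
  unfolding MndP_hom_iff LiftP_hom_iff using LiftP_full lifted_action_natural_pi by blast

end

context EM_pair
begin

lemma weak_lifting_intro: "(V, Vb, \<iota>, \<pi>) \<in> lift_obj K k E v k' E' v'
    \<Longrightarrow> weak_lifting K k t \<mu> \<eta> E v \<psi> k' t' \<mu>' \<eta>' E' v' \<psi>' V Vb \<iota> \<pi>"
  by (intro weak_lifting.intro EM_pair_axioms) (simp add: weak_lifting_axioms_def)

lemma weak_lifting_pair_intro:
  "(V, Vb, \<iota>1, \<pi>1) \<in> lift_obj K k E v k' E' v' \<Longrightarrow> (W, Wb, \<iota>2, \<pi>2) \<in> lift_obj K k E v k' E' v'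
    \<Longrightarrow> weak_lifting_pair K k t \<mu> \<eta> E v \<psi> k' t' \<mu>' \<eta>' E' v' \<psi>' V Vb \<iota>1 \<pi>1 W Wb \<iota>2 \<pi>2"
  by (intro weak_lifting_pair.intro EM_pair_axioms) (simp add: weak_lifting_pair_axioms_def)

lemma LiftI_comp:
  assumes A1: "(V1, Vb1, \<iota>1, \<pi>1) \<in> lift_obj K k E v k' E' v'"
    and A2: "(V2, Vb2, \<iota>2, \<pi>2) \<in> lift_obj K k E v k' E' v'"
    and A3: "(V3, Vb3, \<iota>3, \<pi>3) \<in> lift_obj K k E v k' E' v'"
    and f: "(\<omega>, \<omega>b) \<in> chom (LiftI K k E v k' E' v') (V1, Vb1, \<iota>1, \<pi>1) (V2, Vb2, \<iota>2, \<pi>2)"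
    and g: "(\<omega>', \<omega>b') \<in> chom (LiftI K k E v k' E' v') (V2, Vb2, \<iota>2, \<pi>2) (V3, Vb3, \<iota>3, \<pi>3)"
  shows "(\<omega>' \<cdot> \<omega>, \<omega>b' \<cdot> \<omega>b) \<in> chom (LiftI K k E v k' E' v') (V1, Vb1, \<iota>1, \<pi>1) (V3, Vb3, \<iota>3, \<pi>3)"
proof -
  interpret L1: weak_lifting K k t \<mu> \<eta> E v \<psi> k' t' \<mu>' \<eta>' E' v' \<psi>' V1 Vb1 \<iota>1 \<pi>1
    by (rule weak_lifting_intro[OF A1])
  interpret L2: weak_lifting K k t \<mu> \<eta> E v \<psi> k' t' \<mu>' \<eta>' E' v' \<psi>' V2 Vb2 \<iota>2 \<pi>2
    by (rule weak_lifting_intro[OF A2])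
  interpret L3: weak_lifting K k t \<mu> \<eta> E v \<psi> k' t' \<mu>' \<eta>' E' v' \<psi>' V3 Vb3 \<iota>3 \<pi>3
    by (rule weak_lifting_intro[OF A3])
  from f have f': "\<omega> \<in> hom2 K V1 V2" "\<omega>b \<in> hom2 K Vb1 Vb2"
    and c1: "\<iota>2 \<cdot> (\<one> v' \<odot> \<omega>b) = (\<omega> \<odot> \<one> v) \<cdot> \<iota>1"
    unfolding LiftI_def wl_wr_hcomp by auto
  from g have g': "\<omega>' \<in> hom2 K V2 V3" "\<omega>b' \<in> hom2 K Vb2 Vb3"
    and c2: "\<iota>3 \<cdot> (\<one> v' \<odot> \<omega>b') = (\<omega>' \<odot> \<one> v) \<cdot> \<iota>2"
    unfolding LiftI_def wl_wr_hcomp by auto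
  note h = hom2D[OF f'(1)] hom2D[OF f'(2)] hom2D[OF g'(1)] hom2D[OF g'(2)]
  show ?thesis unfolding LiftI_def wl_wr_hcomp using h
    by (auto intro!: hom2I simp: c1 vcomp_reassoc[OF c1] c2 vcomp_reassoc[OF c2])
qed

lemma LiftP_comp:
  assumes A1: "(V1, Vb1, \<iota>1, \<pi>1) \<in> lift_obj K k E v k' E' v'"
    and A2: "(V2, Vb2, \<iota>2, \<pi>2) \<in> lift_obj K k E v k' E' v'"
    and A3: "(V3, Vb3, \<iota>3, \<pi>3) \<in> lift_obj K k E v k' E' v'"
    and f: "(\<omega>, \<omega>b) \<in> chom (LiftP K k E v k' E' v') (V1, Vb1, \<iota>1, \<pi>1) (V2, Vb2, \<iota>2, \<pi>2)"
    and g: "(\<omega>', \<omega>b') \<in> chom (LiftP K k E v k' E' v') (V2, Vb2, \<iota>2, \<pi>2) (V3, Vb3, \<iota>3, \<pi>3)"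
  shows "(\<omega>' \<cdot> \<omega>, \<omega>b' \<cdot> \<omega>b) \<in> chom (LiftP K k E v k' E' v') (V1, Vb1, \<iota>1, \<pi>1) (V3, Vb3, \<iota>3, \<pi>3)"
proof -
  interpret L1: weak_lifting K k t \<mu> \<eta> E v \<psi> k' t' \<mu>' \<eta>' E' v' \<psi>' V1 Vb1 \<iota>1 \<pi>1
    by (rule weak_lifting_intro[OF A1])
  interpret L2: weak_lifting K k t \<mu> \<eta> E v \<psi> k' t' \<mu>' \<eta>' E' v' \<psi>' V2 Vb2 \<iota>2 \<pi>2
    by (rule weak_lifting_intro[OF A2])
  interpret L3: weak_lifting K k t \<mu> \<eta> E v \<psi> k' t' \<mu>' \<eta>' E' v' \<psi>' V3 Vb3 \<iota>3 \<pi>3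
    by (rule weak_lifting_intro[OF A3])
  from f have f': "\<omega> \<in> hom2 K V1 V2" "\<omega>b \<in> hom2 K Vb1 Vb2"
    and c1: "(\<one> v' \<odot> \<omega>b) \<cdot> \<pi>1 = \<pi>2 \<cdot> (\<omega> \<odot> \<one> v)"
    unfolding LiftP_def wl_wr_hcomp by auto
  from g have g': "\<omega>' \<in> hom2 K V2 V3" "\<omega>b' \<in> hom2 K Vb2 Vb3"
    and c2: "(\<one> v' \<odot> \<omega>b') \<cdot> \<pi>2 = \<pi>3 \<cdot> (\<omega>' \<odot> \<one> v)"
    unfolding LiftP_def wl_wr_hcomp by auto
  note h = hom2D[OF f'(1)] hom2D[OF f'(2)] hom2D[OF g'(1)] hom2D[OF g'(2)]
  show ?thesis unfolding LiftP_def wl_wr_hcomp using h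
    by (auto intro!: hom2I simp: c1 vcomp_reassoc[OF c1] c2 vcomp_reassoc[OF c2])
qed

end

section \<open>The equivalences\<close>

locale lift_mnd_correspondence = EM_pair +
  fixes C :: "(_, _) category" and D :: "(_, _) category"
  assumes split: "idempotents_split K"
    and C: "cobj C = lift_obj K k E v k' E' v'"
      "ccomp C = (\<lambda>(\<omega>, \<omega>b) (\<omega>', \<omega>b'). (\<omega> \<cdot> \<omega>', \<omega>b \<cdot> \<omega>b'))"
      "cid C = (\<lambda>(V, Vb, \<iota>, \<pi>). (\<one> V, \<one> Vb))"
    and D: "cobj D = mnd_obj K k t \<mu> k' t' \<mu>'" "ccomp D = vcomp K" "cid D = (\<lambda>(V, \<phi>). \<one> V)"
    and D_hom: "\<And>V \<phi> W \<phi>' \<omega>. \<omega> \<in> chom D (V, \<phi>) (W, \<phi>') \<Longrightarrow> \<omega> \<in> hom2 K V W"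
    and C_id: "\<And>V Vb \<iota> \<pi>. (V, Vb, \<iota>, \<pi>) \<in> lift_obj K k E v k' E' v'
      \<Longrightarrow> (\<one> V, \<one> Vb) \<in> chom C (V, Vb, \<iota>, \<pi>) (V, Vb, \<iota>, \<pi>)"
    and C_comp: "\<And>V1 Vb1 \<iota>1 \<pi>1 V2 Vb2 \<iota>2 \<pi>2 V3 Vb3 \<iota>3 \<pi>3 \<omega> \<omega>b \<omega>' \<omega>b'.
      (V1, Vb1, \<iota>1, \<pi>1) \<in> lift_obj K k E v k' E' v' \<Longrightarrow> (V2, Vb2, \<iota>2, \<pi>2) \<in> lift_obj K k E v k' E' v' \<Longrightarrow>
      (V3, Vb3, \<iota>3, \<pi>3) \<in> lift_obj K k E v k' E' v' \<Longrightarrow>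
      (\<omega>, \<omega>b) \<in> chom C (V1, Vb1, \<iota>1, \<pi>1) (V2, Vb2, \<iota>2, \<pi>2) \<Longrightarrow>
      (\<omega>', \<omega>b') \<in> chom C (V2, Vb2, \<iota>2, \<pi>2) (V3, Vb3, \<iota>3, \<pi>3) \<Longrightarrow>
      (\<omega>' \<cdot> \<omega>, \<omega>b' \<cdot> \<omega>b) \<in> chom C (V1, Vb1, \<iota>1, \<pi>1) (V3, Vb3, \<iota>3, \<pi>3)"
    and F_hom_iff: "\<And>V Vb \<iota>1 \<pi>1 W Wb \<iota>2 \<pi>2 \<omega>.
      (V, Vb, \<iota>1, \<pi>1) \<in> lift_obj K k E v k' E' v' \<Longrightarrow> (W, Wb, \<iota>2, \<pi>2) \<in> lift_obj K k E v k' E' v' \<Longrightarrow>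
      \<omega> \<in> chom D (V, induced_law V Vb \<iota>1 \<pi>1) (W, induced_law W Wb \<iota>2 \<pi>2) \<longleftrightarrow>
      (\<exists>\<omega>b. (\<omega>, \<omega>b) \<in> chom C (V, Vb, \<iota>1, \<pi>1) (W, Wb, \<iota>2, \<pi>2))"
    and F_faithful: "\<And>V Vb \<iota>1 \<pi>1 W Wb \<iota>2 \<pi>2 \<omega> \<omega>b1 \<omega>b2.
      (V, Vb, \<iota>1, \<pi>1) \<in> lift_obj K k E v k' E' v' \<Longrightarrow> (W, Wb, \<iota>2, \<pi>2) \<in> lift_obj K k E v k' E' v' \<Longrightarrow>
      (\<omega>, \<omega>b1) \<in> chom C (V, Vb, \<iota>1, \<pi>1) (W, Wb, \<iota>2, \<pi>2) \<Longrightarrow>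
      (\<omega>, \<omega>b2) \<in> chom C (V, Vb, \<iota>1, \<pi>1) (W, Wb, \<iota>2, \<pi>2) \<Longrightarrow> \<omega>b1 = \<omega>b2"
begin

lemma lift_to_mnd_functor: "is_functor C D lift_to_mnd_obj lift_to_mnd_arr"
  unfolding is_functor_def C D
proof (intro conjI ballI)
  fix A assume "A \<in> lift_obj K k E v k' E' v'"
  then show "lift_to_mnd_obj A \<in> mnd_obj K k t \<mu> k' t' \<mu>'"
    unfolding lift_to_mnd_obj_def
    using weak_lifting.induced_law_mnd_obj[OF weak_lifting_intro] by (cases A) auto
next
  fix A B f assume "A \<in> lift_obj K k E v k' E' v'" "B \<in> lift_obj K k E v k' E' v'" "f \<in> chom C A B"
  then show "lift_to_mnd_arr A B f \<in> chom D (lift_to_mnd_obj A) (lift_to_mnd_obj B)"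
    unfolding lift_to_mnd_obj_def lift_to_mnd_arr_def using F_hom_iff by (cases A, cases B, cases f) auto
qed (auto simp: lift_to_mnd_obj_def lift_to_mnd_arr_def split: prod.splits)

theorem lift_to_mnd_equivalence: "is_equivalence C D lift_to_mnd_obj lift_to_mnd_arr"
proof -
  interpret full_faithful_surjective C D lift_to_mnd_obj lift_to_mnd_arr
  proof
    fix A B g assume "A \<in> cobj C" "B \<in> cobj C" "g \<in> chom D (lift_to_mnd_obj A) (lift_to_mnd_obj B)"
    moreover obtain V Vb \<iota>1 \<pi>1 W Wb \<iota>2 \<pi>2 where "A = (V, Vb, \<iota>1, \<pi>1)" "B = (W, Wb, \<iota>2, \<pi>2)"
      by (cases A, cases B)
    ultimately obtain \<omega>b where "(g, \<omega>b) \<in> chom C A B"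
      unfolding C lift_to_mnd_obj_def using F_hom_iff by auto
    then show "\<exists>f\<in>chom C A B. lift_to_mnd_arr A B f = g"
      by (intro bexI[of _ "(g, \<omega>b)"]) (simp_all add: lift_to_mnd_arr_def)
  next
    fix A B f f' assume "A \<in> cobj C" "B \<in> cobj C" "f \<in> chom C A B" "f' \<in> chom C A B"
      "lift_to_mnd_arr A B f = lift_to_mnd_arr A B f'"
    then show "f = f'"
      unfolding C lift_to_mnd_arr_def using F_faithful by (cases A, cases B, cases f, cases f') auto
  next
    fix Y assume "Y \<in> cobj D"
    moreover obtain V \<phi> where Y: "Y = (V, \<phi>)" by (cases Y)
    ultimately obtain Vb \<iota> \<pi> where "(V, Vb, \<iota>, \<pi>) \<in> lift_obj K k E v k' E' v'"
      "induced_law V Vb \<iota> \<pi> = \<phi>"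
      unfolding D using mnd_obj_has_weak_lifting[OF split] by blast
    then show "\<exists>A\<in>cobj C. lift_to_mnd_obj A = Y"
      by (intro bexI[of _ "(V, Vb, \<iota>, \<pi>)"]) (simp_all add: C Y lift_to_mnd_obj_def)
  next
    fix A assume "A \<in> cobj C"
    then show "cid C A \<in> chom C A A" unfolding C using C_id by (cases A) auto
  next
    fix A B X f g assume "A \<in> cobj C" "B \<in> cobj C" "X \<in> cobj C" "f \<in> chom C A B" "g \<in> chom C B X"
    then show "ccomp C g f \<in> chom C A X"
      unfolding C using C_comp by (cases A, cases B, cases X, cases f, cases g) auto
  next
    fix X Y g assume "X \<in> cobj D" "Y \<in> cobj D" "g \<in> chom D X Y"
    moreover obtain V \<phi> W \<phi>' where "X = (V, \<phi>)" "Y = (W, \<phi>')" by (cases X, cases Y)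
    ultimately have "g \<in> hom2 K V W" using D_hom by simp
    with \<open>X = (V, \<phi>)\<close> \<open>Y = (W, \<phi>')\<close> show "ccomp D (cid D Y) g = g \<and> ccomp D g (cid D X) = g"
      unfolding D by (auto dest: hom2D)
  qed (rule lift_to_mnd_functor)
  show ?thesis by (rule equivalence)
qed

end

context EM_pair
begin

theorem LiftI_MndI_equivalence:
  assumes "idempotents_split K"
  shows "is_equivalence (LiftI K k E v k' E' v') (MndI K k t \<mu> \<eta> k' t' \<mu>' \<eta>')
    lift_to_mnd_obj lift_to_mnd_arr"
proof (rule lift_mnd_correspondence.lift_to_mnd_equivalence[of K k t \<mu> \<eta> E v \<psi> k' t' \<mu>' \<eta>' E' v' \<psi>'],
    intro lift_mnd_correspondence.intro EM_pair_axioms lift_mnd_correspondence_axioms.intro assms)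
  fix V Vb \<iota>1 \<pi>1 W Wb \<iota>2 \<pi>2 \<omega>
  assume "(V, Vb, \<iota>1, \<pi>1) \<in> lift_obj K k E v k' E' v'" "(W, Wb, \<iota>2, \<pi>2) \<in> lift_obj K k E v k' E' v'"
  then interpret weak_lifting_pair K k t \<mu> \<eta> E v \<psi> k' t' \<mu>' \<eta>' E' v' \<psi>' V Vb \<iota>1 \<pi>1 W Wb \<iota>2 \<pi>2
    by (rule weak_lifting_pair_intro)
  show "\<omega> \<in> chom (MndI K k t \<mu> \<eta> k' t' \<mu>' \<eta>') (V, P.\<psi>V) (W, Q.\<psi>V) \<longleftrightarrow>
      (\<exists>\<omega>b. (\<omega>, \<omega>b) \<in> chom (LiftI K k E v k' E' v') (V, Vb, \<iota>1, \<pi>1) (W, Wb, \<iota>2, \<pi>2))"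
    by (rule MndI_hom_iff_LiftI)
qed ((rule LiftI_comp weak_lifting.LiftI_id[OF weak_lifting_intro]
      weak_lifting_pair.LiftI_faithful[OF weak_lifting_pair_intro]; assumption)
    | simp add: LiftI_def MndI_def)+

theorem LiftP_MndP_equivalence:
  assumes "idempotents_split K"
  shows "is_equivalence (LiftP K k E v k' E' v') (MndP K k t \<mu> \<eta> k' t' \<mu>' \<eta>')
    lift_to_mnd_obj lift_to_mnd_arr"
proof (rule lift_mnd_correspondence.lift_to_mnd_equivalence[of K k t \<mu> \<eta> E v \<psi> k' t' \<mu>' \<eta>' E' v' \<psi>'],
    intro lift_mnd_correspondence.intro EM_pair_axioms lift_mnd_correspondence_axioms.intro assms)
  fix V Vb \<iota>1 \<pi>1 W Wb \<iota>2 \<pi>2 \<omega>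
  assume "(V, Vb, \<iota>1, \<pi>1) \<in> lift_obj K k E v k' E' v'" "(W, Wb, \<iota>2, \<pi>2) \<in> lift_obj K k E v k' E' v'"
  then interpret weak_lifting_pair K k t \<mu> \<eta> E v \<psi> k' t' \<mu>' \<eta>' E' v' \<psi>' V Vb \<iota>1 \<pi>1 W Wb \<iota>2 \<pi>2
    by (rule weak_lifting_pair_intro)
  show "\<omega> \<in> chom (MndP K k t \<mu> \<eta> k' t' \<mu>' \<eta>') (V, P.\<psi>V) (W, Q.\<psi>V) \<longleftrightarrow>
      (\<exists>\<omega>b. (\<omega>, \<omega>b) \<in> chom (LiftP K k E v k' E' v') (V, Vb, \<iota>1, \<pi>1) (W, Wb, \<iota>2, \<pi>2))"
    by (rule MndP_hom_iff_LiftP)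
qed ((rule LiftP_comp weak_lifting.LiftP_id[OF weak_lifting_intro]
      weak_lifting_pair.LiftP_faithful[OF weak_lifting_pair_intro]; assumption)
    | simp add: LiftP_def MndP_def)+

end

section \<open>Monoidal structure\<close>

sublocale EM_object \<subseteq> self: EM_pair K k t \<mu> \<eta> E v \<psi> k t \<mu> \<eta> E v \<psi>
  by unfold_locales

context EM_object
begin

lemma lift_tensor_obj:
  assumes "A' \<in> lift_obj K k E v k E v" "A \<in> lift_obj K k E v k E v"
  shows "lift_tensor K A' A \<in> lift_obj K k E v k E v"
proof -
  obtain V' Vb' \<iota>' \<pi>' V Vb \<iota> \<pi> where A': "A' = (V', Vb', \<iota>', \<pi>')" and A: "A = (V, Vb, \<iota>, \<pi>)"
    by (cases A', cases A)
  interpret L': weak_lifting K k t \<mu> \<eta> E v \<psi> k t \<mu> \<eta> E v \<psi> V' Vb' \<iota>' \<pi>'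
    by (rule self.weak_lifting_intro) (use assms A' in simp)
  interpret L: weak_lifting K k t \<mu> \<eta> E v \<psi> k t \<mu> \<eta> E v \<psi> V Vb \<iota> \<pi>
    by (rule self.weak_lifting_intro) (use assms A in simp)
  have e1: "(\<one> V' \<odot> \<pi>) \<cdot> (\<one> V' \<odot> \<iota>) = \<one> (V' \<bullet> v \<bullet> Vb)"
    using whisker_cong[OF L.pi_iota, of V' "id1 K E"] by simp
  have e2: "(\<pi>' \<odot> \<one> Vb) \<cdot> (\<iota>' \<odot> \<one> Vb) = \<one> (v \<bullet> Vb' \<bullet> Vb)"
    using whisker_cong[OF L'.pi_iota, of "id1 K k" Vb] by simp
  show ?thesis unfolding A' A lift_tensor_def lift_obj_def wl_wr_hcomp
    by (auto intro!: hom1I hom2I simp: e1 vcomp_reassoc[OF e1] e2)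
qed

lemma induced_law_tensor:
  assumes A': "(V', Vb', \<iota>', \<pi>') \<in> lift_obj K k E v k E v" and A: "(V, Vb, \<iota>, \<pi>) \<in> lift_obj K k E v k E v"
  shows "self.induced_law (V' \<bullet> V) (Vb' \<bullet> Vb) ((\<one> V' \<odot> \<iota>) \<cdot> (\<iota>' \<odot> \<one> Vb)) ((\<pi>' \<odot> \<one> Vb) \<cdot> (\<one> V' \<odot> \<pi>))
     = (\<one> V' \<odot> self.induced_law V Vb \<iota> \<pi>) \<cdot> (self.induced_law V' Vb' \<iota>' \<pi>' \<odot> \<one> V)"
proof -
  interpret L': weak_lifting K k t \<mu> \<eta> E v \<psi> k t \<mu> \<eta> E v \<psi> V' Vb' \<iota>' \<pi>'
    by (rule self.weak_lifting_intro[OF A'])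
  interpret L: weak_lifting K k t \<mu> \<eta> E v \<psi> k t \<mu> \<eta> E v \<psi> V Vb \<iota> \<pi>
    by (rule self.weak_lifting_intro[OF A])
  let ?a' = "self.lifted_action V' Vb' \<iota>' \<pi>'"
  have r1: "(\<one> V' \<odot> (\<one> t \<odot> (\<one> V \<odot> \<eta>))) \<cdot> (?a' \<odot> \<one> (f \<bullet> V)) =
      (?a' \<odot> \<one> (f \<bullet> V \<bullet> t)) \<cdot> (\<one> t \<odot> (\<one> V' \<odot> (\<one> t \<odot> (\<one> V \<odot> \<eta>))))"
    using whisker_exchange[of ?a' "\<one> f \<odot> (\<one> V \<odot> \<eta>)"] by simp
  have r2: "(\<one> V' \<odot> (\<one> t \<odot> (\<pi> \<odot> \<one> f))) \<cdot> (?a' \<odot> \<one> (f \<bullet> V \<bullet> t)) =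
      (?a' \<odot> \<one> (f \<bullet> v \<bullet> Vb \<bullet> f)) \<cdot> (\<one> t \<odot> (\<one> V' \<odot> (\<one> t \<odot> (\<pi> \<odot> \<one> f))))"
    using whisker_exchange[of ?a' "\<one> f \<odot> (\<pi> \<odot> \<one> f)"] by simp
  have r3: "(\<one> V' \<odot> (\<psi> \<odot> \<one> (Vb \<bullet> f))) \<cdot> (?a' \<odot> \<one> (f \<bullet> v \<bullet> Vb \<bullet> f)) =
      (?a' \<odot> \<one> (Vb \<bullet> f)) \<cdot> (\<one> t \<odot> (\<one> V' \<odot> (\<psi> \<odot> \<one> (Vb \<bullet> f))))"
    using whisker_exchange[of ?a' "eps \<odot> \<one> (Vb \<bullet> f)"] by simp
  have b4: "(\<one> t \<odot> (\<one> V \<odot> \<eta>)) \<cdot> (\<eta> \<odot> \<one> V) = (\<eta> \<odot> \<one> (V \<bullet> t)) \<cdot> (\<one> V \<odot> \<eta>)"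
    using eta_natural[of "\<one> V \<odot> \<eta>"] by simp
  have r4: "(\<one> t \<odot> (\<one> V' \<odot> (\<one> t \<odot> (\<one> V \<odot> \<eta>)))) \<cdot> (\<one> t \<odot> (\<one> V' \<odot> (\<eta> \<odot> \<one> V))) =
      (\<one> t \<odot> (\<one> V' \<odot> (\<eta> \<odot> \<one> (V \<bullet> t)))) \<cdot> (\<one> t \<odot> (\<one> V' \<odot> (\<one> V \<odot> \<eta>)))"
    using whisker_cong[OF b4, of "t \<bullet> V'" "id1 K k"] by simp
  have b5: "(\<one> t \<odot> (\<pi> \<odot> \<one> f)) \<cdot> (\<eta> \<odot> \<one> (V \<bullet> t)) = (\<eta> \<odot> \<one> (v \<bullet> Vb \<bullet> f)) \<cdot> (\<pi> \<odot> \<one> f)"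
    using eta_natural[of "\<pi> \<odot> \<one> f"] by simp
  have r5: "(\<one> t \<odot> (\<one> V' \<odot> (\<one> t \<odot> (\<pi> \<odot> \<one> f)))) \<cdot> (\<one> t \<odot> (\<one> V' \<odot> (\<eta> \<odot> \<one> (V \<bullet> t)))) =
      (\<one> t \<odot> (\<one> V' \<odot> (\<eta> \<odot> \<one> (v \<bullet> Vb \<bullet> f)))) \<cdot> (\<one> t \<odot> (\<one> V' \<odot> (\<pi> \<odot> \<one> f)))"
    using whisker_cong[OF b5, of "t \<bullet> V'" "id1 K k"] by simp
  have r6: "(\<one> t \<odot> (\<one> V' \<odot> (\<psi> \<odot> \<one> (Vb \<bullet> f)))) \<cdot> (\<one> t \<odot> (\<one> V' \<odot> (\<eta> \<odot> \<one> (v \<bullet> Vb \<bullet> f)))) =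
      \<one> (t \<bullet> V' \<bullet> v \<bullet> Vb \<bullet> f)"
    using whisker_cong[OF psi_unit, of "t \<bullet> V'" "Vb \<bullet> f"] by simp
  have "(\<one> V' \<odot> self.induced_law V Vb \<iota> \<pi>) \<cdot> (self.induced_law V' Vb' \<iota>' \<pi>' \<odot> \<one> V) =
      (\<one> V' \<odot> (\<iota> \<odot> \<one> f)) \<cdot> (?a' \<odot> \<one> (Vb \<bullet> f)) \<cdot> (\<one> t \<odot> (\<one> V' \<odot> (\<pi> \<odot> \<one> f))) \<cdot>
      (\<one> t \<odot> (\<one> V' \<odot> (\<one> V \<odot> \<eta>)))"
    unfolding self.induced_law_def[of V'] unfolding self.induced_law_def self.lifted_action_def[of V]
    by (simp add: r1 vcomp_reassoc[OF r1] r2 vcomp_reassoc[OF r2] r3 vcomp_reassoc[OF r3]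
        r4 vcomp_reassoc[OF r4] r5 vcomp_reassoc[OF r5] r6 vcomp_reassoc[OF r6])
  also have "\<dots> = self.induced_law (V' \<bullet> V) (Vb' \<bullet> Vb) ((\<one> V' \<odot> \<iota>) \<cdot> (\<iota>' \<odot> \<one> Vb))
      ((\<pi>' \<odot> \<one> Vb) \<cdot> (\<one> V' \<odot> \<pi>))"
    unfolding self.lifted_action_def self.induced_law_def by simp
  finally show ?thesis by simp
qed

lemma lift_unit_obj: "lift_unit K k E v \<in> lift_obj K k E v k E v"
  unfolding lift_unit_def lift_obj_def by (auto intro!: hom1I hom2I)

lemma induced_law_lift_unit: "self.induced_law (id1 K k) (id1 K E) (\<one> v) (\<one> v) = \<one> t"
  unfolding self.induced_law_def self.lifted_action_def by (simp add: mu_wl_eta)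

lemma lift_obj_endo: "(V, Vb, \<iota>, \<pi>) \<in> lift_obj K k E v k E v \<Longrightarrow> V \<in> arr K \<and> src1 K V = k \<and> tgt1 K V = k"
  unfolding lift_obj_def hom1_def by auto

lemma lift_to_mnd_obj_apply: "self.lift_to_mnd_obj (V, Vb, \<iota>, \<pi>) = (V, self.induced_law V Vb \<iota> \<pi>)"
  by (simp add: self.lift_to_mnd_obj_def)

lemma lift_to_mnd_obj_tensor:
  assumes "A \<in> lift_obj K k E v k E v" "B \<in> lift_obj K k E v k E v"
  shows "mnd_tensor K (self.lift_to_mnd_obj A) (self.lift_to_mnd_obj B) = self.lift_to_mnd_obj (lift_tensor K A B)"
  using assms induced_law_tensor
  by (cases A, cases B) (simp add: lift_to_mnd_obj_apply mnd_tensor_def lift_tensor_def wl_wr_hcomp)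

lemma lift_to_mnd_obj_unit: "self.lift_to_mnd_obj (lift_unit K k E v) = mnd_unit K k t"
  by (simp add: lift_unit_def lift_to_mnd_obj_apply mnd_unit_def induced_law_lift_unit)

end

locale lift_mnd_monoidal = EM_object +
  fixes C :: "(_, _) category" and D :: "(_, _) category"
  assumes C: "cobj C = lift_obj K k E v k E v" "cid C = (\<lambda>(V, Vb, \<iota>, \<pi>). (\<one> V, \<one> Vb))"
    and C_hom: "\<And>V Vb \<iota> \<pi> W Wb \<iota>' \<pi>' \<omega> \<omega>b.
      (\<omega>, \<omega>b) \<in> chom C (V, Vb, \<iota>, \<pi>) (W, Wb, \<iota>', \<pi>') \<Longrightarrow> \<omega> \<in> hom2 K V W"
    and C_id: "\<And>A. A \<in> cobj C \<Longrightarrow> cid C A \<in> chom C A A"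
    and D: "ccomp D = vcomp K" "cid D = (\<lambda>(V, \<phi>). \<one> V)"
    and F: "is_functor C D self.lift_to_mnd_obj self.lift_to_mnd_arr"
begin

abbreviation "Fo \<equiv> self.lift_to_mnd_obj"
abbreviation "Fm \<equiv> self.lift_to_mnd_arr"

lemma identity_iso:
  assumes A: "A \<in> cobj C"
  shows "is_iso D (Fo A) (Fo A) (cid D (Fo A))"
proof -
  obtain V Vb \<iota> \<pi> where A_eq: "A = (V, Vb, \<iota>, \<pi>)" by (cases A)
  have "cid D (Fo A) \<in> chom D (Fo A) (Fo A)"
    using F C_id[OF A] A unfolding is_functor_def by metis
  moreover have "V \<in> arr K" using lift_obj_endo A A_eq C by blast
  ultimately show ?thesis
    unfolding is_iso_def A_eq lift_to_mnd_obj_apply D by (auto intro!: bexI[of _ "\<one> V"])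
qed

lemma tensor_natural:
  assumes objs: "A \<in> cobj C" "B \<in> cobj C" "A' \<in> cobj C" "B' \<in> cobj C"
    and arrs: "x \<in> chom C A A'" "y \<in> chom C B B'"
  shows "ccomp D (Fm (lift_tensor K A B) (lift_tensor K A' B') (lift_tensor_arr K x y))
      (cid D (Fo (lift_tensor K A B))) =
    ccomp D (cid D (Fo (lift_tensor K A' B'))) (hcomp K (Fm A A' x) (Fm B B' y))"
proof -
  obtain V1 Vb1 \<iota>1 \<pi>1 where A: "A = (V1, Vb1, \<iota>1, \<pi>1)" by (cases A)
  obtain V2 Vb2 \<iota>2 \<pi>2 where B: "B = (V2, Vb2, \<iota>2, \<pi>2)" by (cases B)
  obtain W1 Wb1 \<iota>1' \<pi>1' where A': "A' = (W1, Wb1, \<iota>1', \<pi>1')" by (cases A')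
  obtain W2 Wb2 \<iota>2' \<pi>2' where B': "B' = (W2, Wb2, \<iota>2', \<pi>2')" by (cases B')
  obtain \<omega>1 \<omega>b1 \<omega>2 \<omega>b2 where xy: "x = (\<omega>1, \<omega>b1)" "y = (\<omega>2, \<omega>b2)" by (cases x, cases y)
  have "\<omega>1 \<in> hom2 K V1 W1" "\<omega>2 \<in> hom2 K V2 W2"
    using arrs C_hom unfolding A B A' B' xy by blast+
  moreover have "V1 \<in> arr K" "V2 \<in> arr K" "W1 \<in> arr K" "W2 \<in> arr K" "src1 K V1 = k" "tgt1 K V2 = k"
    using objs lift_obj_endo unfolding C A B A' B' by blast+
  ultimately show ?thesis
    unfolding A B A' B' xy
    by (auto simp: self.lift_to_mnd_arr_def lift_to_mnd_obj_apply D lift_tensor_def lift_tensor_arr_def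
        dest!: hom2D)
qed

theorem strong_monoidal: "strong_monoidal C (lift_tensor K) (lift_tensor_arr K) (lift_unit K k E v)
    D (mnd_tensor K) (hcomp K) (mnd_unit K k t) Fo Fm"
  unfolding strong_monoidal_def
proof (intro exI conjI ballI)
  show "is_iso D (mnd_unit K k t) (Fo (lift_unit K k E v)) (\<one> (id1 K k))"
    using identity_iso[of "lift_unit K k E v"] lift_unit_obj
    by (simp add: C lift_to_mnd_obj_unit mnd_unit_def D)
next
  fix A B assume "A \<in> cobj C" "B \<in> cobj C"
  then show "is_iso D (mnd_tensor K (Fo A) (Fo B)) (Fo (lift_tensor K A B))
      (cid D (Fo (lift_tensor K A B)))"
    using identity_iso[of "lift_tensor K A B"] lift_tensor_obj lift_to_mnd_obj_tensor by (simp add: C)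
next
  fix A B X assume "A \<in> cobj C" "B \<in> cobj C" "X \<in> cobj C"
  moreover obtain V1 Vb1 \<iota>1 \<pi>1 V2 Vb2 \<iota>2 \<pi>2 V3 Vb3 \<iota>3 \<pi>3
    where "A = (V1, Vb1, \<iota>1, \<pi>1)" "B = (V2, Vb2, \<iota>2, \<pi>2)" "X = (V3, Vb3, \<iota>3, \<pi>3)"
    by (cases A, cases B, cases X)
  ultimately show "ccomp D (cid D (Fo (lift_tensor K (lift_tensor K A B) X)))
      (hcomp K (cid D (Fo (lift_tensor K A B))) (cid D (Fo X))) =
    ccomp D (cid D (Fo (lift_tensor K A (lift_tensor K B X))))
      (hcomp K (cid D (Fo A)) (cid D (Fo (lift_tensor K B X))))"
    using lift_obj_endo[of V1] lift_obj_endo[of V2] lift_obj_endo[of V3]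
    by (simp add: C lift_to_mnd_obj_apply D lift_tensor_def)
next
  fix A assume "A \<in> cobj C"
  moreover obtain V Vb \<iota> \<pi> where "A = (V, Vb, \<iota>, \<pi>)" by (cases A)
  ultimately show "ccomp D (cid D (Fo (lift_tensor K (lift_unit K k E v) A)))
        (hcomp K (\<one> (id1 K k)) (cid D (Fo A))) = cid D (Fo A)"
    and "ccomp D (cid D (Fo (lift_tensor K A (lift_unit K k E v))))
        (hcomp K (cid D (Fo A)) (\<one> (id1 K k))) = cid D (Fo A)"
    using lift_obj_endo[of V] by (simp_all add: C lift_to_mnd_obj_apply D lift_tensor_def lift_unit_def)
qed (rule tensor_natural)

end

context EM_object
begin

theorem LiftI_MndI_monoidal_equivalence:
  assumes "idempotents_split K"
  shows "monoidally_equivalent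
    (LiftI K k E v k E v) (lift_tensor K) (lift_tensor_arr K) (lift_unit K k E v)
    (MndI K k t \<mu> \<eta> k t \<mu> \<eta>) (mnd_tensor K) (hcomp K) (mnd_unit K k t)"
proof -
  have eq: "is_equivalence (LiftI K k E v k E v) (MndI K k t \<mu> \<eta> k t \<mu> \<eta>)
      self.lift_to_mnd_obj self.lift_to_mnd_arr"
    by (rule self.LiftI_MndI_equivalence[OF assms])
  have "strong_monoidal
      (LiftI K k E v k E v) (lift_tensor K) (lift_tensor_arr K) (lift_unit K k E v)
      (MndI K k t \<mu> \<eta> k t \<mu> \<eta>) (mnd_tensor K) (hcomp K) (mnd_unit K k t)
      self.lift_to_mnd_obj self.lift_to_mnd_arr"
  proof (rule lift_mnd_monoidal.strong_monoidal, intro lift_mnd_monoidal.intro EM_object_axioms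
      lift_mnd_monoidal_axioms.intro)
    show "is_functor (LiftI K k E v k E v) (MndI K k t \<mu> \<eta> k t \<mu> \<eta>)
        self.lift_to_mnd_obj self.lift_to_mnd_arr"
      using eq unfolding is_equivalence_def by blast
  next
    fix A assume "A \<in> cobj (LiftI K k E v k E v)"
    moreover obtain V Vb \<iota> \<pi> where "A = (V, Vb, \<iota>, \<pi>)" by (cases A)
    ultimately show "cid (LiftI K k E v k E v) A \<in> chom (LiftI K k E v k E v) A A"
      using weak_lifting.LiftI_id[OF self.weak_lifting_intro] by (simp add: LiftI_def)
  qed (simp_all add: LiftI_def MndI_def)
  with eq show ?thesis unfolding monoidally_equivalent_def by blast
qed

theorem LiftP_MndP_monoidal_equivalence:
  assumes "idempotents_split K"
  shows "monoidally_equivalent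
    (LiftP K k E v k E v) (lift_tensor K) (lift_tensor_arr K) (lift_unit K k E v)
    (MndP K k t \<mu> \<eta> k t \<mu> \<eta>) (mnd_tensor K) (hcomp K) (mnd_unit K k t)"
proof -
  have eq: "is_equivalence (LiftP K k E v k E v) (MndP K k t \<mu> \<eta> k t \<mu> \<eta>)
      self.lift_to_mnd_obj self.lift_to_mnd_arr"
    by (rule self.LiftP_MndP_equivalence[OF assms])
  have "strong_monoidal
      (LiftP K k E v k E v) (lift_tensor K) (lift_tensor_arr K) (lift_unit K k E v)
      (MndP K k t \<mu> \<eta> k t \<mu> \<eta>) (mnd_tensor K) (hcomp K) (mnd_unit K k t)
      self.lift_to_mnd_obj self.lift_to_mnd_arr"
  proof (rule lift_mnd_monoidal.strong_monoidal, intro lift_mnd_monoidal.intro EM_object_axioms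
      lift_mnd_monoidal_axioms.intro)
    show "is_functor (LiftP K k E v k E v) (MndP K k t \<mu> \<eta> k t \<mu> \<eta>)
        self.lift_to_mnd_obj self.lift_to_mnd_arr"
      using eq unfolding is_equivalence_def by blast
  next
    fix A assume "A \<in> cobj (LiftP K k E v k E v)"
    moreover obtain V Vb \<iota> \<pi> where "A = (V, Vb, \<iota>, \<pi>)" by (cases A)
    ultimately show "cid (LiftP K k E v k E v) A \<in> chom (LiftP K k E v k E v) A A"
      using weak_lifting.LiftP_id[OF self.weak_lifting_intro] by (simp add: LiftP_def)
  qed (simp_all add: LiftP_def MndP_def)
  with eq show ?thesis unfolding monoidally_equivalent_def by blast
qed

end


theorem theorem4p4:
  fixes K :: "('o,'m,'c) twocat"
  assumes "twocat K"
    and "admits_EM K"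
    and "idempotents_split K"
    and "is_monad K k t \<mu> \<eta>"
    and "is_monad K k' t' \<mu>' \<eta>'"
    and "is_EM K k t \<mu> \<eta> E v \<psi>"
    and "is_EM K k' t' \<mu>' \<eta>' E' v' \<psi>'"
  shows "equivalent_cats (LiftI K k E v k' E' v') (MndI K k t \<mu> \<eta> k' t' \<mu>' \<eta>')
       \<and> equivalent_cats (LiftP K k E v k' E' v') (MndP K k t \<mu> \<eta> k' t' \<mu>' \<eta>')
       \<and> monoidally_equivalent
           (LiftI K k E v k E v) (lift_tensor K) (lift_tensor_arr K) (lift_unit K k E v)
           (MndI K k t \<mu> \<eta> k t \<mu> \<eta>) (mnd_tensor K) (hcomp K) (mnd_unit K k t)
       \<and> monoidally_equivalent
           (LiftP K k E v k E v) (lift_tensor K) (lift_tensor_arr K) (lift_unit K k E v)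
           (MndP K k t \<mu> \<eta> k t \<mu> \<eta>) (mnd_tensor K) (hcomp K) (mnd_unit K k t)"
proof -
  interpret EM_pair K k t \<mu> \<eta> E v \<psi> k' t' \<mu>' \<eta>' E' v' \<psi>'
    by unfold_locales (use assms in auto)
  show ?thesis
    unfolding equivalent_cats_def
    using LiftI_MndI_equivalence[OF assms(3)] LiftP_MndP_equivalence[OF assms(3)]
      A.LiftI_MndI_monoidal_equivalence[OF assms(3)] A.LiftP_MndP_monoidal_equivalence[OF assms(3)]
    by blast
qed

end
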